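(* Let $(T_n)_{n\ge0}$ be the uniform random recursive tree process and, for $k\ge1$, $0<t<1$ and $n\ge1$, let \[ Z_{n,k}(t)=\frac{1}{|L_n(k)|}\,\bigl|\{i\le n:\ i\in L_n(k),\ \deg_n(i)>t\log n\}\bigr| \] be the proportion of vertices in level $k$ of $T_n$ whose degree exceeds $t\log n$ (with $Z_{n,k}(t)$ defined arbitrarily when $L_n(k)=\emptyset$). Then for every integer $k\ge1$ and every $t\in(0,1)$, \[ \lim_{n\to\infty} Z_{n,k}(t)=(1-t)^k\quad\text{almost surely.} \]
   Context: Uniform random recursive tree: start at step $0$ with the tree $T_0$ consisting of the single vertex $0$ (the root). At step $n\ge1$, a vertex is chosen uniformly at random among the existing vertices $0,1,\dots,n-1$, independently of the past, and a new vertex $n$ is added and joined by an edge to the chosen vertex; $T_n$ denotes the resulting tree on vertices $0,1,\dots,n$. $\deg_n(i)$ denotes the degree (number of incident edges) of vertex $i$ in $T_n$, for $i\le n$. Level $k$ of $T_n$, denoted $L_n(k)$, is the set of vertices of $T_n$ at graph distance exactly $k$ from the root $0$. $\log$ is the natural logarithm. *)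

theory Defs
  imports "HOL-Probability.Probability"
begin

text \<open>A sample point is a sequence
  \<omega> :: nat \<Rightarrow> nat, where \<omega> m is the vertex chosen at step m+1
  (uniform on {0..m}, independently).  So vertex m+1 is attached to \<omega> m.\<close>

definition RRT :: "(nat \<Rightarrow> nat) measure" where
  "RRT = (\<Pi>\<^sub>M m\<in>UNIV. measure_pmf (pmf_of_set {0..m}))"

text \<open>Parent of vertex j \<ge> 1 (the min only matters off the support).\<close>
definition par :: "(nat \<Rightarrow> nat) \<Rightarrow> nat \<Rightarrow> nat" where
  "par \<omega> j = min (\<omega> (j - 1)) (j - 1)"

definition edges :: "(nat \<Rightarrow> nat) \<Rightarrow> nat \<Rightarrow> (nat \<times> nat) set" where
  "edges \<omega> n = {(j, par \<omega> j) | j. 1 \<le> j \<and> j \<le> n}"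

definition deg :: "(nat \<Rightarrow> nat) \<Rightarrow> nat \<Rightarrow> nat \<Rightarrow> nat" where
  "deg \<omega> n i = card {e \<in> edges \<omega> n. fst e = i \<or> snd e = i}"

fun depth :: "(nat \<Rightarrow> nat) \<Rightarrow> nat \<Rightarrow> nat" where
  "depth \<omega> 0 = 0"
| "depth \<omega> (Suc j) = Suc (depth \<omega> (min (\<omega> j) j))"

lemma depth_par: "1 \<le> j \<Longrightarrow> depth \<omega> j = Suc (depth \<omega> (par \<omega> j))"
  by (cases j) (auto simp: par_def)

definition level :: "(nat \<Rightarrow> nat) \<Rightarrow> nat \<Rightarrow> nat \<Rightarrow> nat set" where
  "level \<omega> n k = {i. i \<le> n \<and> depth \<omega> i = k}"

text \<open>Proportion of level-k vertices with degree > t log n (0 if level empty).\<close>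
definition Z :: "(nat \<Rightarrow> nat) \<Rightarrow> nat \<Rightarrow> nat \<Rightarrow> real \<Rightarrow> real" where
  "Z \<omega> n k t = real (card {i. i \<le> n \<and> i \<in> level \<omega> n k \<and> real (deg \<omega> n i) > t * ln (real n)})
                / real (card (level \<omega> n k))"

end

theory Submission
  imports Defs "HOL-Real_Asymp.Real_Asymp"
begin

(* Every event we need depends on finitely many choices, so its probability is an average
   over the m! equally likely histories of length m; the one-step recursion for these
   averages (avg_Suc) replaces all conditional-expectation arguments.

   1. Level sizes.  The mean of |L_n(k)| is at most H_n^k, and |L_n(k)| minus its
      compensator sum_{j<n} |L_j(k-1)|/(j+1) is a martingale whose second moment is at
      most H_n^k.  Chebyshev and Borel-Cantelli along n = 2^(j^2), Stolz-Cesaro for the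
      compensator and monotone interpolation give, by induction on k,
      |L_n(k)| ~ H_n^k / k!  almost surely.
   2. Degrees.  The degree of i is its number of children up to one; given that i is on
      level k, the children counts have explicit exponential moments, so Chernoff bounds
      and a union bound over dyadic blocks 2^j <= n < 2^(j+1) show that almost surely,
      eventually, level-k vertices i <= n^(1-t-d) have degree > t ln n and those with
      i >= n^(1-t+d) do not.
   3. Hence Z_n(k,t) is squeezed between |L_{n^(1-t-d)}(k)| / |L_n(k)| and
      |L_{n^(1-t+d)}(k)| / |L_n(k)|, which tend to (1-t-d)^k and (1-t+d)^k by step 1;
      let d -> 0.
   The file follows this plan: tree combinatorics, averages over histories and their link
   to RRT, level sizes, children counts and Chernoff bounds, real-analysis tools
   (Stolz-Cesaro, interpolation, harmonic numbers), the almost-sure level asymptotics, the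
   bad dyadic blocks, and finally the sandwich argument and the theorem. *)

lemma depth_prefix_cong:
  "(\<forall>l<i. w l = w' l) \<Longrightarrow> depth w i = depth w' i"
proof (induction i rule: less_induct)
  case (less i)
  show ?case
  proof (cases i)
    case (Suc j)
    have "min (w j) j < i" "\<forall>l<min (w j) j. w l = w' l" "w j = w' j"
      using Suc less.prems by auto
    then show ?thesis using Suc less.IH by simp
  qed simp
qed

lemma depth_eq_0_iff: "depth w i = 0 \<longleftrightarrow> i = 0"
  by (cases i) auto

definition level_size :: "(nat \<Rightarrow> nat) \<Rightarrow> nat \<Rightarrow> nat \<Rightarrow> nat" where
  "level_size w n k = card (level w n k)"

lemma level_size_prefix_cong:
  "(\<forall>l<n. w l = w' l) \<Longrightarrow> level_size w n k = level_size w' n k"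
  unfolding level_size_def level_def
  by (rule arg_cong[where f=card]) (auto intro: depth_prefix_cong[THEN sym] depth_prefix_cong)

lemma level_size_root: "level_size w n 0 = 1"
proof -
  have "level w n 0 = {0}" by (auto simp: level_def depth_eq_0_iff)
  then show ?thesis by (simp add: level_size_def)
qed

lemma level_size_Suc:
  "level_size w (Suc n) k = level_size w n k + of_bool (depth w (Suc n) = k)"
proof -
  have "level w (Suc n) k = level w n k \<union> (if depth w (Suc n) = k then {Suc n} else {})"
    by (auto simp: level_def le_Suc_eq)
  then show ?thesis unfolding level_size_def by (auto simp: level_def card_insert_if)
qed

lemma level_size_mono: "m \<le> n \<Longrightarrow> level_size w m k \<le> level_size w n k"
  unfolding level_size_def level_def by (rule card_mono) auto

lemma level_size_indicator_sum:
  "real (level_size w n k) = (\<Sum>v\<le>n. of_bool (depth w v = k))"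
  by (simp add: level_size_def level_def Int_def conj_commute atMost_def)

declare sum_of_bool_eq [simp del] split_of_bool [split del]

lemma level_size_arrival_sum:
  "1 \<le> k \<Longrightarrow> real (level_size w n k) = (\<Sum>j<n. of_bool (depth w (Suc j) = k))"
proof (induction n)
  case 0
  have "level w 0 k = {}" using 0 by (auto simp: level_def)
  then show ?case by (simp add: level_size_def)
qed (simp add: level_size_Suc of_bool_def)

text \<open>Number of children of vertex i in T_n: the steps l < n at which i is chosen.
  (The condition i \<le> l only matters off the support of the process.)\<close>
definition children :: "(nat \<Rightarrow> nat) \<Rightarrow> nat \<Rightarrow> nat \<Rightarrow> nat" where
  "children w n i = card {l. i \<le> l \<and> l < n \<and> w l = i}"

lemma children_Suc:
  "i \<le> n \<Longrightarrow> children w (Suc n) i = children w n i + of_bool (w n = i)"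
proof -
  assume "i \<le> n"
  then have "{l. i \<le> l \<and> l < Suc n \<and> w l = i}
      = {l. i \<le> l \<and> l < n \<and> w l = i} \<union> (if w n = i then {n} else {})"
    by (auto simp: less_Suc_eq)
  then show ?thesis unfolding children_def by (auto simp: card_insert_if)
qed

lemma children_self: "children w i i = 0"
  by (simp add: children_def)

lemma children_prefix_cong:
  "(\<forall>l<n. w l = w' l) \<Longrightarrow> children w n i = children w' n i"
  unfolding children_def by (rule arg_cong[where f=card]) auto

lemma children_mono: "m \<le> n \<Longrightarrow> children w m i \<le> children w n i"
  unfolding children_def by (rule card_mono) auto

definition admissible :: "(nat \<Rightarrow> nat) \<Rightarrow> bool" where
  "admissible w \<longleftrightarrow> (\<forall>m. w m \<le> m)"

lemma par_admissible: "admissible w \<Longrightarrow> par w (Suc l) = w l"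
  by (simp add: par_def admissible_def min_def)

lemma finite_edges: "finite (edges w n)"
proof -
  have "edges w n = (\<lambda>j. (j, par w j)) ` {1..n}" by (auto simp: edges_def)
  then show ?thesis by simp
qed

lemma children_le_deg:
  assumes "admissible w"
  shows "children w n i \<le> deg w n i"
proof -
  let ?C = "{l. i \<le> l \<and> l < n \<and> w l = i}"
  have "(\<lambda>l. (Suc l, w l)) ` ?C \<subseteq> {e \<in> edges w n. fst e = i \<or> snd e = i}"
    using par_admissible[OF assms] by (force simp: edges_def)
  then have "card ((\<lambda>l. (Suc l, w l)) ` ?C) \<le> deg w n i"
    unfolding deg_def by (rule card_mono[rotated]) (simp add: finite_edges)
  moreover have "inj_on (\<lambda>l. (Suc l, w l)) ?C" by (auto simp: inj_on_def)
  ultimately show ?thesis unfolding children_def by (subst (asm) card_image) auto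
qed

lemma deg_le_Suc_children:
  assumes "admissible w"
  shows "deg w n i \<le> Suc (children w n i)"
proof -
  let ?C = "{l. i \<le> l \<and> l < n \<and> w l = i}"
  have "{e \<in> edges w n. fst e = i \<or> snd e = i} \<subseteq> insert (i, par w i) ((\<lambda>l. (Suc l, w l)) ` ?C)"
  proof
    fix e assume e: "e \<in> {e \<in> edges w n. fst e = i \<or> snd e = i}"
    then obtain j where j: "1 \<le> j" "j \<le> n" "e = (j, par w j)" by (auto simp: edges_def)
    then obtain l where l: "j = Suc l" by (cases j) auto
    show "e \<in> insert (i, par w i) ((\<lambda>l. (Suc l, w l)) ` ?C)"
    proof (cases "j = i")
      case False
      then have "w l = i" using e j l par_admissible[OF assms, of l] by auto
      moreover have "w l \<le> l" using assms by (simp add: admissible_def)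
      ultimately show ?thesis using j l par_admissible[OF assms, of l] by auto
    qed (use j in simp)
  qed
  then have "deg w n i \<le> card (insert (i, par w i) ((\<lambda>l. (Suc l, w l)) ` ?C))"
    unfolding deg_def by (rule card_mono[rotated]) auto
  also have "\<dots> \<le> Suc (card ((\<lambda>l. (Suc l, w l)) ` ?C))"
    by (rule card_insert_le_m1) auto
  also have "\<dots> \<le> Suc (children w n i)"
    unfolding children_def by (simp add: card_image_le)
  finally show ?thesis .
qed

text \<open>There are m!
  of them, each equally likely; averaging over them computes expectations of
  functionals depending only on the first m choices.\<close>
definition histories :: "nat \<Rightarrow> nat list set" where
  "histories m = {xs. length xs = m \<and> (\<forall>l<m. xs ! l \<le> l)}"

definition avg :: "nat \<Rightarrow> ((nat \<Rightarrow> nat) \<Rightarrow> real) \<Rightarrow> real" where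
  "avg m F = (\<Sum>xs\<in>histories m. F ((!) xs)) / fact m"

definition determined_by :: "nat \<Rightarrow> ((nat \<Rightarrow> nat) \<Rightarrow> 'a) \<Rightarrow> bool" where
  "determined_by m F \<longleftrightarrow> (\<forall>w w'. (\<forall>l<m. w l = w' l) \<longrightarrow> F w = F w')"

lemma determined_byD:
  "determined_by m F \<Longrightarrow> (\<And>l. l < m \<Longrightarrow> w l = w' l) \<Longrightarrow> F w = F w'"
  unfolding determined_by_def by blast

lemma determined_by_mono: "determined_by m F \<Longrightarrow> m \<le> m' \<Longrightarrow> determined_by m' F"
  unfolding determined_by_def by auto

lemma histories_0: "histories 0 = {[]}"
  by (auto simp: histories_def)

lemma histories_Suc:
  "histories (Suc m) = (\<lambda>(xs, v). xs @ [v]) ` (histories m \<times> {0..m})"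
proof (intro set_eqI iffI)
  fix ys assume ys: "ys \<in> histories (Suc m)"
  then have "ys \<noteq> []" by (auto simp: histories_def)
  then obtain xs v where yv: "ys = xs @ [v]" by (metis rev_exhaust)
  have len: "length xs = m" and all: "\<forall>l<Suc m. (xs @ [v]) ! l \<le> l"
    using ys yv by (auto simp: histories_def)
  have "xs \<in> histories m" unfolding histories_def
  proof (intro CollectI conjI allI impI)
    fix l assume "l < m"
    then show "xs ! l \<le> l" using all[rule_format, of l] len by (simp add: nth_append)
  qed (rule len)
  moreover have "v \<le> m" using all[rule_format, of m] len by (metis lessI nth_append_length)
  ultimately show "ys \<in> (\<lambda>(xs, v). xs @ [v]) ` (histories m \<times> {0..m})" using yv by auto
next
  fix ys assume "ys \<in> (\<lambda>(xs, v). xs @ [v]) ` (histories m \<times> {0..m})"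
  then show "ys \<in> histories (Suc m)" by (auto simp: histories_def nth_append less_Suc_eq)
qed

lemma inj_snoc: "inj_on (\<lambda>(xs, v). xs @ [v]) A"
  by (auto simp: inj_on_def)

lemma finite_histories: "finite (histories m)"
  by (induction m) (auto simp: histories_0 histories_Suc)

lemma card_histories: "card (histories m) = fact m"
proof (induction m)
  case (Suc m)
  have "card (histories (Suc m)) = card (histories m \<times> {0..m})"
    unfolding histories_Suc by (rule card_image) (rule inj_snoc)
  then show ?case using Suc by (simp add: card_cartesian_product algebra_simps)
qed (simp add: histories_0)

lemma avg_Suc:
  assumes "determined_by (Suc m) F"
  shows "avg (Suc m) F = avg m (\<lambda>w. (\<Sum>v\<le>m. F (w(m := v))) / real (Suc m))"
proof -
  have snoc: "F ((!) (xs @ [v])) = F (((!) xs)(m := v))" if "xs \<in> histories m" for xs v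
    using that by (intro determined_byD[OF assms]) (auto simp: histories_def nth_append less_Suc_eq)
  have "(\<Sum>ys\<in>histories (Suc m). F ((!) ys))
      = (\<Sum>p\<in>histories m \<times> {0..m}. F ((!) ((\<lambda>(xs, v). xs @ [v]) p)))"
    unfolding histories_Suc by (rule sum.reindex[OF inj_snoc, unfolded comp_def])
  also have "\<dots> = (\<Sum>xs\<in>histories m. \<Sum>v\<in>{0..m}. F ((!) (xs @ [v])))"
    by (subst sum.cartesian_product) (simp add: case_prod_beta)
  also have "\<dots> = (\<Sum>xs\<in>histories m. \<Sum>v\<le>m. F (((!) xs)(m := v)))"
    by (intro sum.cong) (auto simp: snoc)
  finally show ?thesis
    unfolding avg_def by (simp add: sum_divide_distrib[symmetric] divide_divide_eq_left mult.commute)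
qed

lemma avg_const: "avg m (\<lambda>_. c) = c"
  by (simp add: avg_def card_histories)

lemma avg_add: "avg m (\<lambda>w. F w + G w) = avg m F + avg m G"
  by (simp add: avg_def sum.distrib add_divide_distrib)

lemma avg_multc: "avg m (\<lambda>w. F w * c) = avg m F * c"
  by (simp add: avg_def sum_distrib_right)

lemma avg_divc: "avg m (\<lambda>w. F w / c) = avg m F / c"
  by (simp add: avg_def sum_divide_distrib[symmetric])

lemma avg_sum: "finite I \<Longrightarrow> avg m (\<lambda>w. \<Sum>i\<in>I. F i w) = (\<Sum>i\<in>I. avg m (F i))"
  by (simp add: avg_def sum_divide_distrib[symmetric]) (rule sum.swap)

lemma avg_mono: "(\<And>w. F w \<le> G w) \<Longrightarrow> avg m F \<le> avg m G"
  unfolding avg_def by (intro divide_right_mono sum_mono) auto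

lemma avg_nonneg: "(\<And>w. 0 \<le> F w) \<Longrightarrow> 0 \<le> avg m F"
  using avg_mono[of "\<lambda>_. 0" F m] by (simp add: avg_const)

lemma avg_determined:
  assumes "determined_by m F" "m \<le> m'"
  shows "avg m' F = avg m F"
  using assms(2)
proof (induction m' rule: dec_induct)
  case (step n)
  have upd: "F (w(n := v)) = F w" for w v
    using step by (intro determined_byD[OF assms(1)]) auto
  have "avg (Suc n) F = avg n (\<lambda>w. (\<Sum>v\<le>n. F (w(n := v))) / real (Suc n))"
    using determined_by_mono[OF assms(1)] step by (intro avg_Suc) auto
  then show ?case using step by (simp add: upd)
qed simp

lemma avg_indicator_ex_le:
  assumes "finite I"
  shows "avg m (\<lambda>w. of_bool (\<exists>i\<in>I. P i w)) \<le> (\<Sum>i\<in>I. avg m (\<lambda>w. of_bool (P i w)))"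
proof -
  have "of_bool (\<exists>i\<in>I. P i w) \<le> (\<Sum>i\<in>I. of_bool (P i w) :: real)" for w
  proof (cases "\<exists>i\<in>I. P i w")
    case True
    then obtain i0 where "i0 \<in> I" "P i0 w" by blast
    then show ?thesis using member_le_sum[of i0 I "\<lambda>i. of_bool (P i w) :: real"] assms by (simp add: of_bool_def)
  qed (simp add: sum_nonneg)
  then show ?thesis by (simp add: avg_mono avg_sum[OF assms, symmetric])
qed

definition choice :: "nat \<Rightarrow> nat measure" where
  "choice m = measure_pmf (pmf_of_set {0..m})"

lemma RRT_eq: "RRT = PiM UNIV choice"
  unfolding RRT_def choice_def by simp

lemma prob_space_choice: "prob_space (choice m)"
  unfolding choice_def by (rule measure_pmf.prob_space_axioms)

lemma sets_choice [simp]: "sets (choice m) = UNIV"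
  by (simp add: choice_def)

lemma space_choice [simp]: "space (choice m) = UNIV"
  by (simp add: choice_def)

interpretation R: prob_space RRT
  unfolding RRT_eq by (rule prob_space_PiM) (rule prob_space_choice)

lemma space_RRT [simp]: "space RRT = UNIV"
  unfolding RRT_eq by (simp add: space_PiM)

definition prefix :: "nat \<Rightarrow> (nat \<Rightarrow> nat) \<Rightarrow> nat list" where
  "prefix m w = map w [0..<m]"

lemma prefix_vimage:
  "prefix m -` {xs} = (if length xs = m then {w. \<forall>l<m. w l = xs ! l} else {})"
proof -
  have "prefix m w = xs \<longleftrightarrow> length xs = m \<and> (\<forall>l<m. w l = xs ! l)" for w
    unfolding prefix_def list_eq_iff_nth_eq by auto
  then show ?thesis by auto
qed

lemma cylinder_eq:
  "{w. \<forall>l<m. w l = xs ! l} = prod_emb UNIV choice {..<m} (PiE {..<m} (\<lambda>l. {xs ! l}))"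
  by (auto simp: prod_emb_iff PiE_iff)

lemma measurable_prefix: "prefix m \<in> measurable RRT (count_space UNIV)"
proof -
  have "{w. \<forall>l<m. w l = xs ! l} \<in> sets RRT" for xs
    unfolding cylinder_eq RRT_eq by (rule sets_PiM_I) auto
  then show ?thesis
    unfolding measurable_count_space_eq2_countable by (auto simp: prefix_vimage)
qed

lemma emeasure_cylinder:
  assumes "length xs = m"
  shows "emeasure RRT {w. \<forall>l<m. w l = xs ! l} = (if xs \<in> histories m then ennreal (1 / fact m) else 0)"
proof -
  have "emeasure RRT {w. \<forall>l<m. w l = xs ! l} = (\<Prod>l<m. emeasure (choice l) {xs ! l})"
    unfolding cylinder_eq RRT_eq by (rule emeasure_PiM_emb) (auto intro: prob_space_choice)
  also have "\<dots> = (if xs \<in> histories m then ennreal (1 / fact m) else 0)"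
  proof (cases "xs \<in> histories m")
    case True
    then have "(\<Prod>l<m. emeasure (choice l) {xs ! l}) = (\<Prod>l<m. ennreal (1 / real (Suc l)))"
      by (intro prod.cong refl) (simp add: choice_def emeasure_pmf_of_set histories_def)
    also have "\<dots> = ennreal (\<Prod>l<m. 1 / real (Suc l))"
      by (rule prod_ennreal) simp
    also have "(\<Prod>l<m. 1 / real (Suc l)) = 1 / fact m"
      by (simp add: prod_dividef fact_prod_Suc atLeast0LessThan of_nat_prod)
    finally show ?thesis using True by simp
  next
    case False
    then obtain l where "l < m" "\<not> xs ! l \<le> l" using assms by (auto simp: histories_def)
    then have "emeasure (choice l) {xs ! l} = 0"
      by (simp add: choice_def emeasure_pmf_of_set)
    then have "(\<Prod>l<m. emeasure (choice l) {xs ! l}) = 0"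
      using \<open>l < m\<close> by (intro prod_zero) auto
    then show ?thesis using False by simp
  qed
  finally show ?thesis .
qed

lemma distr_prefix:
  "distr RRT (count_space UNIV) (prefix m) = measure_pmf (pmf_of_set (histories m))"
proof (rule measure_eqI_countable[where A=UNIV])
  fix xs :: "nat list"
  have ne: "histories m \<noteq> {}" using card_histories[of m] by auto
  have "emeasure (distr RRT (count_space UNIV) (prefix m)) {xs} = emeasure RRT (prefix m -` {xs})"
    by (simp add: emeasure_distr[OF measurable_prefix])
  also have "\<dots> = (if xs \<in> histories m then ennreal (1 / fact m) else 0)"
  proof (cases "length xs = m")
    case False
    then have "xs \<notin> histories m" by (auto simp: histories_def)
    with False show ?thesis by (simp add: prefix_vimage)
  qed (simp add: prefix_vimage emeasure_cylinder)
  also have "\<dots> = emeasure (measure_pmf (pmf_of_set (histories m))) {xs}"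
    using ne finite_histories[of m] by (simp add: emeasure_pmf_of_set card_histories)
  finally show "emeasure (distr RRT (count_space UNIV) (prefix m)) {xs}
      = emeasure (measure_pmf (pmf_of_set (histories m))) {xs}" .
qed auto

lemma event_determined_eq:
  assumes "determined_by m P"
  shows "{w. P w} = prefix m -` {xs. P ((!) xs)}"
proof -
  have "P w = P ((!) (prefix m w))" for w
    by (rule determined_byD[OF assms]) (simp add: prefix_def)
  then show ?thesis by auto
qed

lemma sets_determined: "determined_by m P \<Longrightarrow> {w. P w} \<in> sets RRT"
  using measurable_sets[OF measurable_prefix, of "{xs. P ((!) xs)}" m]
  by (simp add: event_determined_eq)

lemma prob_determined:
  assumes "determined_by m P"
  shows "R.prob {w. P w} = avg m (\<lambda>w. of_bool (P w))"
proof -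
  have "R.prob {w. P w} = measure (distr RRT (count_space UNIV) (prefix m)) {xs. P ((!) xs)}"
    unfolding event_determined_eq[OF assms] by (subst measure_distr[OF measurable_prefix]) auto
  also have "\<dots> = card (histories m \<inter> {xs. P ((!) xs)}) / card (histories m)"
    unfolding distr_prefix using card_histories[of m] finite_histories[of m]
    by (subst measure_pmf_of_set) auto
  also have "\<dots> = avg m (\<lambda>w. of_bool (P w))"
    unfolding avg_def card_histories using finite_histories[of m] by (simp add: sum_of_bool_eq)
  finally show ?thesis .
qed

lemma AE_admissible: "AE w in RRT. admissible w"
proof -
  have "AE w in RRT. w m \<le> m" for m
  proof (rule AE_I[where N="{w. \<not> w m \<le> m}"])
    have det: "determined_by (Suc m) (\<lambda>w. \<not> w m \<le> m)"
      unfolding determined_by_def by auto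
    have "avg (Suc m) (\<lambda>w. of_bool (\<not> w m \<le> m)) = 0"
      unfolding avg_def by (simp add: histories_def)
    then show "emeasure RRT {w. \<not> w m \<le> m} = 0"
      using prob_determined[OF det] by (simp add: R.emeasure_eq_measure)
    show "{w. \<not> w m \<le> m} \<in> sets RRT" by (rule sets_determined[OF det])
  qed auto
  then show ?thesis unfolding admissible_def by (simp add: AE_all_countable)
qed

lemma depth_upd: "v \<le> m \<Longrightarrow> depth (w(m := v)) v = depth w v"
  by (rule depth_prefix_cong) auto

lemma depth_upd_Suc: "v \<le> m \<Longrightarrow> depth (w(m := v)) (Suc m) = Suc (depth w v)"
  by (simp add: depth_upd)

lemma level_size_determined: "determined_by n (\<lambda>w. f (level_size w n k))"
  unfolding determined_by_def using level_size_prefix_cong by metis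

lemma level_size_upd: "level_size (w(m := v)) m k = level_size w m k"
  by (rule level_size_prefix_cong) auto

lemma level_size_upd_Suc:
  assumes "1 \<le> k" "v \<le> m"
  shows "real (level_size (w(m := v)) (Suc m) k)
       = real (level_size w m k) + of_bool (depth w v = k - 1)"
proof -
  have "depth (w(m := v)) (Suc m) = Suc (depth w v)" using assms(2) by (rule depth_upd_Suc)
  then show ?thesis using assms unfolding level_size_Suc level_size_upd by (auto simp: of_bool_def)
qed

text \<open>Mean size of level k at time n.  It satisfies
  e(n+1,k) = e(n,k) + e(n,k-1)/(n+1), whence e(n,k) \<le> H_n^k.\<close>
definition mean_level_size :: "nat \<Rightarrow> nat \<Rightarrow> real" where
  "mean_level_size n k = avg n (\<lambda>w. real (level_size w n k))"

lemma mean_level_size_root: "mean_level_size n 0 = 1"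
  by (simp add: mean_level_size_def level_size_root avg_const)

lemma mean_level_size_0: "1 \<le> k \<Longrightarrow> mean_level_size 0 k = 0"
  by (simp add: mean_level_size_def level_size_arrival_sum avg_const)

lemma mean_level_size_Suc:
  assumes "1 \<le> k"
  shows "mean_level_size (Suc m) k = mean_level_size m k + mean_level_size m (k - 1) / real (Suc m)"
proof -
  have "mean_level_size (Suc m) k
      = avg m (\<lambda>w. (\<Sum>v\<le>m. real (level_size (w(m := v)) (Suc m) k)) / real (Suc m))"
    unfolding mean_level_size_def by (rule avg_Suc) (rule level_size_determined)
  also have "\<dots> = avg m (\<lambda>w. real (level_size w m k) + real (level_size w m (k - 1)) / real (Suc m))"
  proof (rule arg_cong[where f="avg m"], rule ext)
    fix w
    have "(\<Sum>v\<le>m. real (level_size (w(m := v)) (Suc m) k))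
        = (\<Sum>v\<le>m. real (level_size w m k) + of_bool (depth w v = k - 1))"
      using assms by (intro sum.cong) (auto simp: level_size_upd_Suc)
    also have "\<dots> = real (Suc m) * real (level_size w m k) + real (level_size w m (k - 1))"
      by (simp add: sum.distrib level_size_indicator_sum)
    finally show "(\<Sum>v\<le>m. real (level_size (w(m := v)) (Suc m) k)) / real (Suc m)
        = real (level_size w m k) + real (level_size w m (k - 1)) / real (Suc m)"
      by (simp add: field_simps)
  qed
  also have "\<dots> = mean_level_size m k + mean_level_size m (k - 1) / real (Suc m)"
    unfolding mean_level_size_def by (simp add: avg_add avg_divc)
  finally show ?thesis .
qed

lemma power_add_ge:
  fixes a h :: real
  assumes "0 \<le> a" "0 \<le> h" "1 \<le> k"
  shows "a ^ k + a ^ (k - 1) * h \<le> (a + h) ^ k"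
proof -
  have "a ^ (k - 1) * (a + h) \<le> (a + h) ^ (k - 1) * (a + h)"
    using assms by (intro mult_right_mono power_mono) auto
  moreover have "a ^ k = a ^ (k - 1) * a" "(a + h) ^ k = (a + h) ^ (k - 1) * (a + h)"
    using assms(3) by (simp_all add: power_eq_if)
  ultimately show ?thesis by (simp add: algebra_simps)
qed

lemma mean_level_size_le: "mean_level_size n k \<le> harm n ^ k"
proof (induction k arbitrary: n)
  case 0 then show ?case by (simp add: mean_level_size_root)
next
  case (Suc k)
  show ?case
  proof (induction n)
    case 0 then show ?case by (simp add: mean_level_size_0 harm_def)
  next
    case (Suc m)
    have "mean_level_size (Suc m) (Suc k)
        = mean_level_size m (Suc k) + mean_level_size m k * inverse (real (Suc m))"
      using mean_level_size_Suc[of "Suc k" m] by (simp add: divide_inverse)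
    also have "\<dots> \<le> harm m ^ Suc k + harm m ^ k * inverse (real (Suc m))"
      using Suc.IH Suc.prems \<open>\<And>n. mean_level_size n k \<le> harm n ^ k\<close>
      by (intro add_mono mult_right_mono) auto
    also have "\<dots> \<le> (harm m + inverse (real (Suc m))) ^ Suc k"
      using power_add_ge[of "harm m" "inverse (real (Suc m))" "Suc k"] by (simp add: harm_nonneg)
    finally show ?case by (simp add: harm_Suc)
  qed
qed

definition depth_prob :: "nat \<Rightarrow> nat \<Rightarrow> real" where
  "depth_prob i k = avg i (\<lambda>w. of_bool (depth w i = k))"

lemma depth_prob_nonneg: "0 \<le> depth_prob i k"
  unfolding depth_prob_def by (rule avg_nonneg) simp

lemma mean_level_size_eq_sum: "mean_level_size n k = (\<Sum>i\<le>n. depth_prob i k)"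
proof -
  have "mean_level_size n k = (\<Sum>i\<le>n. avg n (\<lambda>w. of_bool (depth w i = k)))"
    unfolding mean_level_size_def level_size_indicator_sum by (simp add: avg_sum)
  also have "\<dots> = (\<Sum>i\<le>n. depth_prob i k)"
    unfolding depth_prob_def
    by (intro sum.cong refl avg_determined)
       (auto simp: determined_by_def intro!: arg_cong[where f=of_bool] depth_prefix_cong)
  finally show ?thesis .
qed

text \<open>Its increments are centred given the past,
  so its second moment grows by at most the conditional variance.\<close>
definition level_mart :: "(nat \<Rightarrow> nat) \<Rightarrow> nat \<Rightarrow> nat \<Rightarrow> real" where
  "level_mart w n k = (\<Sum>j<n. of_bool (depth w (Suc j) = k) - real (level_size w j (k - 1)) / real (Suc j))"

lemma level_size_decomposition:
  "1 \<le> k \<Longrightarrow> real (level_size w n k)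
     = level_mart w n k + (\<Sum>j<n. real (level_size w j (k - 1)) / real (Suc j))"
  by (simp add: level_size_arrival_sum level_mart_def sum_subtractf)

lemma level_mart_determined: "determined_by n (\<lambda>w. f (level_mart w n k))"
proof -
  have "level_mart w n k = level_mart w' n k" if "\<forall>l<n. w l = w' l" for w w'
    unfolding level_mart_def
  proof (intro sum.cong refl)
    fix j assume "j \<in> {..<n}"
    then have "depth w (Suc j) = depth w' (Suc j)" "level_size w j (k - 1) = level_size w' j (k - 1)"
      using that by (auto intro!: depth_prefix_cong level_size_prefix_cong)
    then show "of_bool (depth w (Suc j) = k) - real (level_size w j (k - 1)) / real (Suc j)
        = of_bool (depth w' (Suc j) = k) - real (level_size w' j (k - 1)) / real (Suc j)"
      by simp
  qed
  then show ?thesis unfolding determined_by_def by metis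
qed

lemma level_mart_upd_Suc:
  assumes "1 \<le> k" "v \<le> m"
  shows "level_mart (w(m := v)) (Suc m) k
       = level_mart w m k + of_bool (depth w v = k - 1) - real (level_size w m (k - 1)) / real (Suc m)"
proof -
  have "level_mart (w(m := v)) m k = level_mart w m k"
    using level_mart_determined[of m "\<lambda>x. x" k] unfolding determined_by_def by auto
  moreover have "depth (w(m := v)) (Suc m) = Suc (depth w v)"
    using assms(2) by (rule depth_upd_Suc)
  then have "of_bool (depth (w(m := v)) (Suc m) = k) = (of_bool (depth w v = k - 1) :: real)"
    using assms by (auto simp: of_bool_def)
  moreover have "level_mart (w(m := v)) (Suc m) k = level_mart (w(m := v)) m k
      + (of_bool (depth (w(m := v)) (Suc m) = k) - real (level_size (w(m := v)) m (k - 1)) / real (Suc m))"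
    unfolding level_mart_def by (simp only: sum.lessThan_Suc)
  ultimately show ?thesis by (simp add: level_size_upd)
qed

lemma mean_square_centred_step:
  fixes A p :: real and b :: "nat \<Rightarrow> real"
  assumes b: "\<And>v. b v = 0 \<or> b v = 1" and p: "p = (\<Sum>v\<le>m. b v) / real (Suc m)"
  shows "(\<Sum>v\<le>m. (A + b v - p)^2) / real (Suc m) \<le> A^2 + p"
proof -
  have s: "(\<Sum>v\<le>m. b v) = real (Suc m) * p" using p by simp
  have p0: "0 \<le> p" using p b by (auto intro!: divide_nonneg_pos sum_nonneg) (metis order_refl zero_le_one)
  have "(\<Sum>v\<le>m. (A + b v - p)^2)
      = (\<Sum>v\<le>m. A^2 + 2 * A * (b v - p) + (b v - p) * b v - p * (b v - p))"
    by (intro sum.cong refl) (simp add: power2_eq_square algebra_simps)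
  also have "\<dots> = (\<Sum>v\<le>m. A^2) + 2 * A * ((\<Sum>v\<le>m. b v) - real (Suc m) * p)
      + (\<Sum>v\<le>m. (b v - p) * b v) - p * ((\<Sum>v\<le>m. b v) - real (Suc m) * p)"
    by (simp add: sum.distrib sum_subtractf sum_distrib_left[symmetric])
  also have "\<dots> = real (Suc m) * A^2 + (\<Sum>v\<le>m. (b v - p) * b v)"
    using s by simp
  also have "(\<Sum>v\<le>m. (b v - p) * b v) \<le> (\<Sum>v\<le>m. b v)"
  proof (rule sum_mono)
    fix v show "(b v - p) * b v \<le> b v" using b[of v] p0 by auto
  qed
  finally have "(\<Sum>v\<le>m. (A + b v - p)^2) \<le> real (Suc m) * (A^2 + p)"
    using s by (simp add: algebra_simps)
  then show ?thesis by (simp add: divide_le_eq mult.commute)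
qed

lemma level_mart_second_moment:
  "1 \<le> k \<Longrightarrow> avg n (\<lambda>w. (level_mart w n k)^2) \<le> mean_level_size n k"
proof (induction n)
  case 0 then show ?case by (simp add: level_mart_def avg_const mean_level_size_0)
next
  case (Suc m)
  have step: "(\<Sum>v\<le>m. (level_mart (w(m := v)) (Suc m) k)^2) / real (Suc m)
      \<le> (level_mart w m k)^2 + real (level_size w m (k - 1)) / real (Suc m)" for w
  proof -
    have "(\<Sum>v\<le>m. (level_mart (w(m := v)) (Suc m) k)^2)
        = (\<Sum>v\<le>m. (level_mart w m k + of_bool (depth w v = k - 1)
                      - real (level_size w m (k - 1)) / real (Suc m))^2)"
      using Suc.prems by (intro sum.cong refl) (simp add: level_mart_upd_Suc)
    then show ?thesis
      by (simp only:) (rule mean_square_centred_step, auto simp: of_bool_def level_size_indicator_sum)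
  qed
  have "avg (Suc m) (\<lambda>w. (level_mart w (Suc m) k)^2)
      = avg m (\<lambda>w. (\<Sum>v\<le>m. (level_mart (w(m := v)) (Suc m) k)^2) / real (Suc m))"
    by (rule avg_Suc[OF level_mart_determined])
  also have "\<dots> \<le> avg m (\<lambda>w. (level_mart w m k)^2 + real (level_size w m (k - 1)) / real (Suc m))"
    by (rule avg_mono[OF step])
  also have "\<dots> = avg m (\<lambda>w. (level_mart w m k)^2) + mean_level_size m (k - 1) / real (Suc m)"
    by (simp add: avg_add avg_divc mean_level_size_def)
  also have "\<dots> \<le> mean_level_size (Suc m) k"
    using Suc by (simp add: mean_level_size_Suc)
  finally show ?case .
qed

lemma children_upd_Suc:
  "i \<le> m \<Longrightarrow> children (w(m := v)) (Suc m) i = children w m i + of_bool (v = i)"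
proof -
  assume "i \<le> m"
  then have "children (w(m := v)) (Suc m) i = children (w(m := v)) m i + of_bool (v = i)"
    by (simp add: children_Suc)
  moreover have "children (w(m := v)) m i = children w m i"
    by (rule children_prefix_cong) auto
  ultimately show ?thesis by simp
qed

lemma depth_children_determined:
  "i \<le> m \<Longrightarrow> determined_by m (\<lambda>w. f (depth w i) (children w m i))"
proof -
  assume "i \<le> m"
  then have "depth w i = depth w' i \<and> children w m i = children w' m i" if "\<forall>l<m. w l = w' l" for w w'
    using that by (auto intro!: depth_prefix_cong children_prefix_cong)
  then show ?thesis unfolding determined_by_def by metis
qed

lemma sum_exp_indicator:
  assumes "i \<le> m"
  shows "(\<Sum>v\<le>m. exp (s * of_bool (v = i))) = real m + exp s"
proof -
  have "(\<Sum>v\<le>m. exp (s * of_bool (v = i))) = (\<Sum>v\<in>insert i ({..m} - {i}). exp (s * of_bool (v = i)))"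
    using assms by (intro sum.cong) auto
  also have "\<dots> = exp s + (\<Sum>v\<in>{..m} - {i}. 1)" by (subst sum.insert) auto
  also have "\<dots> = exp s + real m" using assms by simp
  finally show ?thesis by simp
qed

text \<open>Exponential moments of the number of children of vertex i, jointly with the event
  that i is on level k: after vertex i has arrived, each step adds a child to i with
  probability 1/(l+1), independently of the depth of i.\<close>
lemma avg_exp_children:
  assumes "i \<le> m"
  shows "avg m (\<lambda>w. of_bool (depth w i = k) * exp (s * real (children w m i)))
       = depth_prob i k * (\<Prod>l\<in>{i..<m}. 1 + (exp s - 1) / real (Suc l))"
  using assms
proof (induction m rule: dec_induct)
  case base then show ?case by (simp add: children_self depth_prob_def)
next
  case (step m)
  have "(\<Sum>v\<le>m. of_bool (depth (w(m := v)) i = k) * exp (s * real (children (w(m := v)) (Suc m) i)))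
      = of_bool (depth w i = k) * exp (s * real (children w m i)) * (real m + exp s)" for w
  proof -
    have d: "depth (w(m := v)) i = depth w i" for v using step by (intro depth_prefix_cong) auto
    have "(\<Sum>v\<le>m. of_bool (depth (w(m := v)) i = k) * exp (s * real (children (w(m := v)) (Suc m) i)))
        = (\<Sum>v\<le>m. of_bool (depth w i = k) * exp (s * real (children w m i)) * exp (s * of_bool (v = i)))"
      using step by (intro sum.cong refl) (simp add: d children_upd_Suc distrib_left exp_add)
    also have "\<dots> = of_bool (depth w i = k) * exp (s * real (children w m i)) * (real m + exp s)"
      using step by (simp add: sum_distrib_left[symmetric] sum_exp_indicator)
    finally show ?thesis .
  qed
  then have "avg (Suc m) (\<lambda>w. of_bool (depth w i = k) * exp (s * real (children w (Suc m) i)))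
      = avg m (\<lambda>w. of_bool (depth w i = k) * exp (s * real (children w m i)) * (1 + (exp s - 1) / real (Suc m)))"
    using step by (subst avg_Suc) (auto intro: depth_children_determined simp: field_simps)
  also have "\<dots> = depth_prob i k * (\<Prod>l\<in>{i..<Suc m}. 1 + (exp s - 1) / real (Suc l))"
    using step by (simp add: avg_multc prod.atLeastLessThan_Suc)
  finally show ?case .
qed

lemma harm_diff_eq_sum: "i \<le> m \<Longrightarrow> (\<Sum>l\<in>{i..<m}. 1 / real (Suc l)) = harm m - harm i"
  by (induction m rule: dec_induct) (simp_all add: harm_Suc divide_inverse)

lemma harm_diff_ge_ln: "i \<le> m \<Longrightarrow> ln (real m + 1) - ln (real i + 1) \<le> harm m - harm i"
proof (induction m rule: dec_induct)
  case (step m)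
  have "1 + 1 / (real m + 1) = (real m + 2) / (real m + 1)" by (simp add: field_simps)
  then have "ln (real m + 2) - ln (real m + 1) = ln (1 + 1 / (real m + 1))"
    by (simp add: ln_div)
  also have "\<dots> \<le> 1 / (real m + 1)" by (rule ln_add_one_self_le_self) simp
  finally show ?case using step by (simp add: harm_Suc divide_inverse add.commute)
qed simp

lemma harm_diff_le_ln:
  assumes "1 \<le> i" "i \<le> m"
  shows "harm m - harm i \<le> ln (real m) - ln (real i)"
  using assms(2)
proof (induction m rule: dec_induct)
  case (step m)
  have m: "real m \<ge> 1" using step assms by simp
  have "ln (real m / (real m + 1)) \<le> real m / (real m + 1) - 1" by (rule ln_le_minus_one) (use m in simp)
  also have "\<dots> = - (1 / (real m + 1))" using m by (simp add: field_simps)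
  finally have "1 / (real m + 1) \<le> ln (real m + 1) - ln (real m)" using m by (simp add: ln_div)
  then show ?case using step by (simp add: harm_Suc divide_inverse add.commute)
qed simp

lemma harm_le_ln: "1 \<le> n \<Longrightarrow> harm n \<le> 1 + ln (real n)"
  using harm_diff_le_ln[of 1 n] by (simp add: harm_def)

lemma ln_le_harm_nat: "1 \<le> n \<Longrightarrow> ln (real n) \<le> harm n"
proof -
  assume "1 \<le> n"
  then have "ln (real n) \<le> ln (real n + 1)" by simp
  then show ?thesis using ln_le_harm[of n] by linarith
qed

lemma prod_le_exp_harm:
  assumes "x \<ge> -1" "i \<le> m"
  shows "(\<Prod>l\<in>{i..<m}. 1 + x / real (Suc l)) \<le> exp (x * (harm m - harm i))"
proof -
  have "(\<Prod>l\<in>{i..<m}. 1 + x / real (Suc l)) \<le> (\<Prod>l\<in>{i..<m}. exp (x / real (Suc l)))"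
  proof (rule prod_mono, rule conjI)
    fix l
    have "-1 / real (Suc l) \<le> x / real (Suc l)" by (rule divide_right_mono) (use assms in auto)
    moreover have "-1 / real (Suc l) \<ge> -1" by (simp add: field_simps)
    ultimately show "0 \<le> 1 + x / real (Suc l)" by linarith
    show "1 + x / real (Suc l) \<le> exp (x / real (Suc l))" by (rule exp_ge_add_one_self)
  qed
  also have "\<dots> = exp (x * (\<Sum>l\<in>{i..<m}. 1 / real (Suc l)))"
    by (simp add: exp_sum sum_distrib_left)
  finally show ?thesis using harm_diff_eq_sum[OF assms(2)] by simp
qed

text \<open>Chernoff bound for the number of children of a level-k vertex, in both directions at
  once: for \<theta> > 0 it bounds the upper tail, for \<theta> < 0 the lower tail.\<close>
lemma children_tail_bound:
  assumes "i \<le> m"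
  shows "avg m (\<lambda>w. of_bool (depth w i = k \<and> \<theta> * y \<le> \<theta> * real (children w m i)))
     \<le> depth_prob i k * exp ((exp \<theta> - 1) * (harm m - harm i) - \<theta> * y)"
proof -
  have "avg m (\<lambda>w. of_bool (depth w i = k \<and> \<theta> * y \<le> \<theta> * real (children w m i)))
      \<le> avg m (\<lambda>w. of_bool (depth w i = k) * exp (\<theta> * real (children w m i)) * exp (- \<theta> * y))"
  proof (rule avg_mono)
    fix w
    have "\<theta> * y \<le> \<theta> * real (children w m i) \<Longrightarrow> 1 \<le> exp (\<theta> * real (children w m i)) * exp (- \<theta> * y)"
      by (simp add: exp_add[symmetric])
    then show "of_bool (depth w i = k \<and> \<theta> * y \<le> \<theta> * real (children w m i))
        \<le> of_bool (depth w i = k) * exp (\<theta> * real (children w m i)) * exp (- \<theta> * y)"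
      by (auto simp: of_bool_def)
  qed
  also have "\<dots> = depth_prob i k * (\<Prod>l\<in>{i..<m}. 1 + (exp \<theta> - 1) / real (Suc l)) * exp (- \<theta> * y)"
    by (simp only: avg_multc avg_exp_children[OF assms])
  also have "\<dots> \<le> depth_prob i k * exp ((exp \<theta> - 1) * (harm m - harm i)) * exp (- \<theta> * y)"
    using assms by (intro mult_right_mono mult_left_mono prod_le_exp_harm depth_prob_nonneg)
                   (auto simp: add_increasing)
  finally show ?thesis by (simp add: mult.assoc exp_add[symmetric])
qed

text \<open>Stolz-Cesaro: if b increases to infinity and \<Delta>a/\<Delta>b \<rightarrow> L then a/b \<rightarrow> L.  The core
  estimate is the telescoped form of "\<Delta>a is within \<epsilon>\<Delta>b of L\<Delta>b".\<close>
lemma telescoping_deviation: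
  fixes a b :: "nat \<Rightarrow> real"
  assumes "\<And>n. n \<ge> N \<Longrightarrow> \<bar>(a (Suc n) - a n) - L * (b (Suc n) - b n)\<bar> \<le> \<epsilon> * (b (Suc n) - b n)"
    and "N \<le> n"
  shows "\<bar>(a n - a N) - L * (b n - b N)\<bar> \<le> \<epsilon> * (b n - b N)"
  using assms(2)
proof (induction n rule: dec_induct)
  case (step n)
  have "(a (Suc n) - a N) - L * (b (Suc n) - b N)
      = ((a n - a N) - L * (b n - b N)) + ((a (Suc n) - a n) - L * (b (Suc n) - b n))"
    by (simp add: algebra_simps)
  then have "\<bar>(a (Suc n) - a N) - L * (b (Suc n) - b N)\<bar>
      \<le> \<bar>(a n - a N) - L * (b n - b N)\<bar> + \<bar>(a (Suc n) - a n) - L * (b (Suc n) - b n)\<bar>"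
    by (metis abs_triangle_ineq)
  also have "\<dots> \<le> \<epsilon> * (b n - b N) + \<epsilon> * (b (Suc n) - b n)"
    using step.IH assms(1)[OF step.hyps(1)] by (intro add_mono) auto
  finally show ?case by (simp add: algebra_simps)
qed simp

lemma deviation_ratio_bound:
  fixes a b :: "nat \<Rightarrow> real"
  assumes tel: "\<bar>(a n - a N) - L * (b n - b N)\<bar> \<le> \<epsilon> * (b n - b N)"
    and start: "\<bar>a N - L * b N\<bar> \<le> \<epsilon> * b n" and bN: "\<bar>b N\<bar> \<le> b n"
    and pos: "0 < b n" and e: "0 \<le> \<epsilon>"
  shows "\<bar>a n / b n - L\<bar> \<le> 3 * \<epsilon>"
proof -
  have "a n - L * b n = (a N - L * b N) + ((a n - a N) - L * (b n - b N))"
    by (simp add: algebra_simps)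
  then have "\<bar>a n - L * b n\<bar> \<le> \<bar>a N - L * b N\<bar> + \<epsilon> * (b n - b N)"
    using tel abs_triangle_ineq[of "a N - L * b N" "(a n - a N) - L * (b n - b N)"] by simp
  also have "\<dots> \<le> \<epsilon> * b n + \<epsilon> * (b n + b n)"
    using start bN e by (intro add_mono mult_left_mono) auto
  finally have "\<bar>a n - L * b n\<bar> / b n \<le> 3 * \<epsilon>" using pos by (simp add: pos_divide_le_eq)
  moreover have "a n / b n - L = (a n - L * b n) / b n" using pos by (simp add: diff_divide_distrib)
  ultimately show ?thesis using pos by (metis abs_div_pos)
qed

lemma stolz_cesaro:
  fixes a b :: "nat \<Rightarrow> real"
  assumes inc: "\<And>n. b n < b (Suc n)" and binf: "filterlim b at_top sequentially"
    and lim: "(\<lambda>n. (a (Suc n) - a n) / (b (Suc n) - b n)) \<longlonglongrightarrow> L"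
  shows "(\<lambda>n. a n / b n) \<longlonglongrightarrow> L"
proof (rule LIMSEQ_I)
  fix r :: real assume r: "0 < r"
  define \<epsilon> where "\<epsilon> = r / 4"
  have e: "0 < \<epsilon>" using r by (simp add: \<epsilon>_def)
  obtain N1 where N1: "\<And>n. n \<ge> N1 \<Longrightarrow> \<bar>(a (Suc n) - a n) / (b (Suc n) - b n) - L\<bar> < \<epsilon>"
    using LIMSEQ_D[OF lim e] by auto
  have stp: "\<bar>(a (Suc n) - a n) - L * (b (Suc n) - b n)\<bar> \<le> \<epsilon> * (b (Suc n) - b n)" if "n \<ge> N1" for n
  proof -
    have d: "b (Suc n) - b n > 0" using inc[of n] by simp
    have "(a (Suc n) - a n) / (b (Suc n) - b n) - L
        = ((a (Suc n) - a n) - L * (b (Suc n) - b n)) / (b (Suc n) - b n)"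
      using d by (simp add: diff_divide_distrib)
    then have "\<bar>(a (Suc n) - a n) - L * (b (Suc n) - b n)\<bar> / (b (Suc n) - b n) < \<epsilon>"
      using N1[OF that] d by (metis abs_div_pos)
    then show ?thesis using d by (metis pos_divide_less_eq mult.commute less_imp_le)
  qed
  define C where "C = \<bar>a N1 - L * b N1\<bar> / \<epsilon> + \<bar>b N1\<bar> + 1"
  obtain N2 where N2: "\<And>n. n \<ge> N2 \<Longrightarrow> b n > C"
    using binf by (auto simp: filterlim_at_top_dense eventually_sequentially)
  show "\<exists>no. \<forall>n\<ge>no. norm (a n / b n - L) < r"
  proof (intro exI allI impI)
    fix n assume n: "n \<ge> max N1 N2"
    have bn: "b n > C" using N2 n by auto
    have C1: "C \<ge> \<bar>b N1\<bar>" "C * \<epsilon> \<ge> \<bar>a N1 - L * b N1\<bar>" "C \<ge> 1"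
      using e by (auto simp: C_def field_simps)
    have "C * \<epsilon> \<le> b n * \<epsilon>" by (rule mult_right_mono) (use bn e in auto)
    then have start: "\<bar>a N1 - L * b N1\<bar> \<le> \<epsilon> * b n" using C1(2) by (simp add: mult.commute)
    have "\<bar>a n / b n - L\<bar> \<le> 3 * \<epsilon>"
      using telescoping_deviation[of N1 a L b \<epsilon> n] stp n bn C1 e start
      by (intro deviation_ratio_bound) auto
    then show "norm (a n / b n - L) < r" using r by (simp add: \<epsilon>_def)
  qed
qed

lemma block_index:
  fixes m :: "nat \<Rightarrow> nat"
  assumes "strict_mono m"
  obtains J where "\<And>n. m 0 \<le> n \<Longrightarrow> m (J n) \<le> n" "\<And>n. n < m (Suc (J n))"
    "filterlim J at_top sequentially"
proof
  define J where "J n = Max {j. m j \<le> n}" for n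
  have fin: "finite {j. m j \<le> n}" for n
    by (rule finite_subset[of _ "{..n}"])
       (auto intro: order.trans[OF strict_mono_imp_increasing[OF assms]])
  have J_ge: "j \<le> J n" if "m j \<le> n" for j n
    unfolding J_def using that by (intro Max_ge[OF fin]) auto
  show "m (J n) \<le> n" if "m 0 \<le> n" for n
    using Max_in[OF fin, of n] that unfolding J_def by auto
  show "n < m (Suc (J n))" for n
    using J_ge[of "Suc (J n)" n] by (cases "m (Suc (J n)) \<le> n") auto
  show "filterlim J at_top sequentially"
    unfolding filterlim_at_top eventually_sequentially using J_ge by blast
qed

lemma ratio_limit_from_subsequence:
  fixes a b :: "nat \<Rightarrow> real" and m :: "nat \<Rightarrow> nat"
  assumes ma: "mono a" and mb: "mono b" and bpos: "\<And>n. n \<ge> m 0 \<Longrightarrow> 0 < b n"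
    and apos: "\<And>n. 0 \<le> a n" and sm: "strict_mono m"
    and lim: "(\<lambda>j. a (m j) / b (m j)) \<longlonglongrightarrow> L"
    and rat: "(\<lambda>j. b (m (Suc j)) / b (m j)) \<longlonglongrightarrow> 1"
  shows "(\<lambda>n. a n / b n) \<longlonglongrightarrow> L"
proof -
  obtain J where J1: "\<And>n. m 0 \<le> n \<Longrightarrow> m (J n) \<le> n" and J2: "\<And>n. n < m (Suc (J n))"
    and Jlim: "filterlim J at_top sequentially"
    using block_index[OF sm] by blast
  have m0: "m 0 \<le> m j" for j using sm by (simp add: strict_mono_less_eq)
  have lo: "(\<lambda>n. (a (m (J n)) / b (m (J n))) / (b (m (Suc (J n))) / b (m (J n)))) \<longlonglongrightarrow> L"
    using filterlim_compose[OF tendsto_divide[OF lim rat one_neq_zero] Jlim] by simp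
  have hi: "(\<lambda>n. a (m (Suc (J n))) / b (m (Suc (J n))) * (b (m (Suc (J n))) / b (m (J n)))) \<longlonglongrightarrow> L"
    using filterlim_compose[OF tendsto_mult[OF LIMSEQ_Suc[OF lim] rat] Jlim] by simp
  have pos: "0 < b (m (J n))" "0 < b (m (Suc (J n)))" for n using bpos m0 by auto
  show ?thesis
  proof (rule tendsto_sandwich[OF _ _ lo hi])
    show "eventually (\<lambda>n. (a (m (J n)) / b (m (J n))) / (b (m (Suc (J n))) / b (m (J n))) \<le> a n / b n)
        sequentially"
      unfolding eventually_sequentially
    proof (intro exI[of _ "m 0"] allI impI)
      fix n assume n: "m 0 \<le> n"
      have "(a (m (J n)) / b (m (J n))) / (b (m (Suc (J n))) / b (m (J n))) = a (m (J n)) / b (m (Suc (J n)))"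
        using pos[of n] by simp
      also have "\<dots> \<le> a n / b n"
        by (rule frac_le) (use apos ma mb J1[OF n] J2[of n] bpos[OF n] in \<open>auto simp: mono_def\<close>)
      finally show "(a (m (J n)) / b (m (J n))) / (b (m (Suc (J n))) / b (m (J n))) \<le> a n / b n" .
    qed
    show "eventually (\<lambda>n. a n / b n \<le> a (m (Suc (J n))) / b (m (Suc (J n))) * (b (m (Suc (J n))) / b (m (J n))))
        sequentially"
      unfolding eventually_sequentially
    proof (intro exI[of _ "m 0"] allI impI)
      fix n assume n: "m 0 \<le> n"
      have "a n / b n \<le> a (m (Suc (J n))) / b (m (J n))"
        by (rule frac_le) (use apos ma mb J1[OF n] J2[of n] pos[of n] in \<open>auto simp: mono_def\<close>)
      also have "\<dots> = a (m (Suc (J n))) / b (m (Suc (J n))) * (b (m (Suc (J n))) / b (m (J n)))"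
        using pos[of n] by simp
      finally show "a n / b n \<le> a (m (Suc (J n))) / b (m (Suc (J n))) * (b (m (Suc (J n))) / b (m (J n)))" .
    qed
  qed
qed

lemma harm_power_increment_bounds:
  "real k * harm m ^ (k - 1) \<le> real (Suc m) * (harm (Suc m) ^ k - harm m ^ k)"
  "real (Suc m) * (harm (Suc m) ^ k - harm m ^ k) \<le> real k * harm (Suc m) ^ (k - 1)"
proof -
  define H :: real where "H = harm m"
  define h :: real where "h = inverse (real (Suc m))"
  have H: "0 \<le> H" and h: "0 \<le> h" by (simp_all add: H_def h_def harm_nonneg)
  have "real (Suc m) * (harm (Suc m) ^ k - harm m ^ k) = (\<Sum>i<k. H ^ (k - Suc i) * (H + h) ^ i)"
    unfolding H_def h_def harm_Suc by (subst power_diff_sumr2) simp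
  moreover have "H ^ (k - 1) \<le> H ^ (k - Suc i) * (H + h) ^ i" if "i < k" for i
  proof -
    have "H ^ (k - 1) = H ^ (k - Suc i) * H ^ i" using that by (simp add: power_add[symmetric])
    also have "\<dots> \<le> H ^ (k - Suc i) * (H + h) ^ i" using H h by (intro mult_left_mono power_mono) auto
    finally show ?thesis .
  qed
  moreover have "H ^ (k - Suc i) * (H + h) ^ i \<le> (H + h) ^ (k - 1)" if "i < k" for i
  proof -
    have "H ^ (k - Suc i) * (H + h) ^ i \<le> (H + h) ^ (k - Suc i) * (H + h) ^ i"
      using H h by (intro mult_right_mono power_mono) auto
    also have "\<dots> = (H + h) ^ (k - 1)" using that by (simp add: power_add[symmetric])
    finally show ?thesis .
  qed
  moreover have "harm (Suc m) = H + h" by (simp add: H_def h_def harm_Suc)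
  ultimately show "real k * harm m ^ (k - 1) \<le> real (Suc m) * (harm (Suc m) ^ k - harm m ^ k)"
    and "real (Suc m) * (harm (Suc m) ^ k - harm m ^ k) \<le> real k * harm (Suc m) ^ (k - 1)"
    using sum_mono[of "{..<k}" "\<lambda>_. H ^ (k - 1)" "\<lambda>i. H ^ (k - Suc i) * (H + h) ^ i"]
          sum_mono[of "{..<k}" "\<lambda>i. H ^ (k - Suc i) * (H + h) ^ i" "\<lambda>_. (H + h) ^ (k - 1)"]
    by (simp_all add: H_def)
qed

text \<open>The library fact harm_pos at type real, for use where the type would be ambiguous.\<close>
lemma harm_pos_real: "0 < m \<Longrightarrow> 0 < (harm m :: real)"
  by simp

lemma harm_Suc_ratio: "(\<lambda>m. harm (Suc m) / harm m :: real) \<longlonglongrightarrow> 1"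
proof -
  have "(\<lambda>m. 1 + inverse (real (Suc m)) * inverse (harm m :: real)) \<longlonglongrightarrow> 1"
    using tendsto_add[OF tendsto_const tendsto_mult[OF LIMSEQ_inverse_real_of_nat
                        tendsto_inverse_0_at_top[OF harm_at_top]], of 1] by simp
  moreover have "eventually (\<lambda>m. 1 + inverse (real (Suc m)) * inverse (harm m) = harm (Suc m) / harm m)
      sequentially"
    using eventually_gt_at_top[of 0]
  proof eventually_elim
    case (elim m)
    then have "harm m \<noteq> (0::real)" using harm_pos_real[of m] by linarith
    then show ?case by (simp add: harm_Suc divide_inverse distrib_right)
  qed
  ultimately show ?thesis by (rule Lim_transform_eventually)
qed

lemma harm_power_increment_ratio:
  assumes "1 \<le> k"
  shows "(\<lambda>m. real (Suc m) * (harm (Suc m) ^ k - harm m ^ k) / harm m ^ (k - 1)) \<longlonglongrightarrow> real k"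
proof (rule tendsto_sandwich)
  show "(\<lambda>m. real k) \<longlonglongrightarrow> real k" by simp
  have "(\<lambda>m. real k * (harm (Suc m) / harm m) ^ (k - 1)) \<longlonglongrightarrow> real k * 1 ^ (k - 1)"
    by (intro tendsto_intros harm_Suc_ratio)
  then show "(\<lambda>m. real k * (harm (Suc m) / harm m) ^ (k - 1)) \<longlonglongrightarrow> real k" by simp
  show "eventually (\<lambda>m. real k \<le> real (Suc m) * (harm (Suc m) ^ k - harm m ^ k) / harm m ^ (k - 1))
      sequentially"
    using eventually_gt_at_top[of 0]
  proof eventually_elim
    case (elim m)
    then have "0 < (harm m ^ (k - 1) :: real)" by simp
    then show ?case using harm_power_increment_bounds(1)[of k m] by (simp add: pos_le_divide_eq)
  qed
  show "eventually (\<lambda>m. real (Suc m) * (harm (Suc m) ^ k - harm m ^ k) / harm m ^ (k - 1)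
      \<le> real k * (harm (Suc m) / harm m) ^ (k - 1)) sequentially"
    using eventually_gt_at_top[of 0]
  proof eventually_elim
    case (elim m)
    have "real (Suc m) * (harm (Suc m) ^ k - harm m ^ k) / harm m ^ (k - 1)
        \<le> real k * harm (Suc m) ^ (k - 1) / harm m ^ (k - 1)"
      using harm_power_increment_bounds(2)[of m k] by (intro divide_right_mono) (auto simp: harm_nonneg)
    then show ?case by (simp add: power_divide)
  qed
qed

text \<open>The Stolz-Cesaro quotient that appears when summing x_m/(m+1) against H_m^k.\<close>
lemma harm_power_stolz_quotient:
  fixes x :: "nat \<Rightarrow> real"
  assumes k: "1 \<le> k" and lim: "(\<lambda>m. x m / harm m ^ (k - 1)) \<longlonglongrightarrow> c"
  shows "(\<lambda>m. (x m / real (Suc m)) / (harm (Suc m) ^ k - harm m ^ k)) \<longlonglongrightarrow> c / real k"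
proof -
  have "(\<lambda>m. (x m / harm m ^ (k - 1))
        / (real (Suc m) * (harm (Suc m) ^ k - harm m ^ k) / harm m ^ (k - 1))) \<longlonglongrightarrow> c / real k"
    using k by (intro tendsto_divide lim harm_power_increment_ratio) auto
  moreover have "eventually (\<lambda>m. (x m / harm m ^ (k - 1))
        / (real (Suc m) * (harm (Suc m) ^ k - harm m ^ k) / harm m ^ (k - 1))
      = (x m / real (Suc m)) / (harm (Suc m) ^ k - harm m ^ k)) sequentially"
    using eventually_gt_at_top[of 0]
  proof eventually_elim
    case (elim m)
    then have "harm m ^ (k - 1) \<noteq> (0::real)" using harm_pos_real[of m] by (simp add: less_imp_neq[symmetric])
    then show ?case by simp
  qed
  ultimately show ?thesis by (rule Lim_transform_eventually)
qed

lemma harm_pow2_bounds: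
  "real n * ln 2 \<le> harm ((2::nat) ^ n)" "harm ((2::nat) ^ n) \<le> 1 + real n * ln 2"
proof -
  have l: "ln (real ((2::nat) ^ n)) = real n * ln 2" by (simp add: ln_realpow)
  show "real n * ln 2 \<le> harm ((2::nat) ^ n)" using ln_le_harm_nat[of "2 ^ n"] l by simp
  show "harm ((2::nat) ^ n) \<le> 1 + real n * ln 2" using harm_le_ln[of "2 ^ n"] l by simp
qed

text \<open>The sparse times 2^(j^2) along which Chebyshev's inequality is summable; consecutive
  harmonic numbers along them have ratio tending to 1.\<close>
definition sparse_time :: "nat \<Rightarrow> nat" where
  "sparse_time j = 2 ^ (j^2)"

lemma strict_mono_sparse_time: "strict_mono sparse_time"
proof (rule strict_monoI_Suc)
  fix j :: nat
  have "j^2 < (Suc j)^2" by (simp add: power2_eq_square)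
  then show "sparse_time j < sparse_time (Suc j)"
    unfolding sparse_time_def by (rule power_strict_increasing) simp
qed

lemma harm_sparse_time_ge: "real (j^2) * ln 2 \<le> harm (sparse_time j)"
  unfolding sparse_time_def by (rule harm_pow2_bounds)

lemma harm_sparse_time_ge_1: "1 \<le> (harm (sparse_time j) :: real)"
  using harm_mono[of 1 "sparse_time j"] by (simp add: sparse_time_def harm_def)

lemma harm_sparse_time_ratio:
  "(\<lambda>j. harm (sparse_time (Suc j)) / harm (sparse_time j) :: real) \<longlonglongrightarrow> 1"
proof (rule tendsto_sandwich)
  show "(\<lambda>j. 1::real) \<longlonglongrightarrow> 1" by simp
  have "(\<lambda>j::nat. (1 + (real j + 1)^2 * ln 2) / ((real j)^2 * ln 2)) \<longlonglongrightarrow> 1" by real_asymp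
  then show "(\<lambda>j::nat. (1 + real ((Suc j)^2) * ln 2) / (real (j^2) * ln 2)) \<longlonglongrightarrow> 1"
    by (simp add: add.commute)
  show "eventually (\<lambda>j. 1 \<le> (harm (sparse_time (Suc j)) / harm (sparse_time j) :: real)) sequentially"
  proof (intro always_eventually allI)
    fix j
    have "(harm (sparse_time j) :: real) \<le> harm (sparse_time (Suc j))"
      using strict_mono_sparse_time by (intro harm_mono) (simp add: strict_mono_def less_imp_le)
    then show "1 \<le> (harm (sparse_time (Suc j)) / harm (sparse_time j) :: real)"
      using harm_sparse_time_ge_1[of j] by (subst le_divide_eq_1_pos) (auto simp: sparse_time_def)
  qed
  show "eventually (\<lambda>j. harm (sparse_time (Suc j)) / harm (sparse_time j)
      \<le> (1 + real ((Suc j)^2) * ln 2) / (real (j^2) * ln 2 :: real)) sequentially"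
    unfolding eventually_sequentially
  proof (intro exI[of _ 1] allI impI)
    fix j :: nat assume j: "1 \<le> j"
    have p: "0 < real (j^2) * ln 2" using j by simp
    show "harm (sparse_time (Suc j)) / harm (sparse_time j)
        \<le> (1 + real ((Suc j)^2) * ln 2) / (real (j^2) * ln 2)"
      unfolding sparse_time_def
      by (rule frac_le) (use harm_pow2_bounds[of "(Suc j)^2"] harm_pow2_bounds[of "j^2"] p in auto)
  qed
qed

lemma floor_powr_tendsto:
  assumes "0 < s"
  shows "filterlim (\<lambda>n::nat. nat \<lfloor>real n powr s\<rfloor>) at_top sequentially"
  unfolding filterlim_at_top
proof
  fix Z :: nat
  have "filterlim (\<lambda>n::nat. real n powr s - 1) at_top sequentially" using assms by real_asymp
  then have "eventually (\<lambda>n. real Z \<le> real n powr s - 1) sequentially" by (simp add: filterlim_at_top)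
  then show "eventually (\<lambda>n. Z \<le> nat \<lfloor>real n powr s\<rfloor>) sequentially"
    by (rule eventually_mono) linarith
qed

lemma harm_floor_powr_bounds:
  assumes "0 < s" "1 \<le> n"
  shows "s * ln (real n) \<le> harm (nat \<lfloor>real n powr s\<rfloor>)"
    and "harm (nat \<lfloor>real n powr s\<rfloor>) \<le> 1 + s * ln (real n)"
proof -
  define x where "x = real n powr s"
  define a where "a = nat \<lfloor>x\<rfloor>"
  have x1: "1 \<le> x" unfolding x_def using assms by (simp add: ge_one_powr_ge_zero)
  have a1: "1 \<le> a" using x1 unfolding a_def by linarith
  have ax: "real a \<le> x" "x \<le> real a + 1" unfolding a_def using x1 by linarith+
  have lx: "ln x = s * ln (real n)" unfolding x_def using assms by (simp add: ln_powr)
  have "ln x \<le> ln (real a + 1)" using ax x1 by simp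
  also have "\<dots> \<le> harm a" by (rule ln_le_harm)
  finally show "s * ln (real n) \<le> harm (nat \<lfloor>real n powr s\<rfloor>)" using lx by (simp add: a_def x_def)
  have "harm a \<le> 1 + ln (real a)" by (rule harm_le_ln[OF a1])
  also have "\<dots> \<le> 1 + ln x" using ax a1 by simp
  finally show "harm (nat \<lfloor>real n powr s\<rfloor>) \<le> 1 + s * ln (real n)" using lx by (simp add: a_def x_def)
qed

lemma harm_floor_powr_ratio:
  assumes s: "0 < s"
  shows "(\<lambda>n::nat. harm (nat \<lfloor>real n powr s\<rfloor>) / harm n :: real) \<longlonglongrightarrow> s"
proof (rule tendsto_sandwich)
  show "(\<lambda>n::nat. s * ln (real n) / (1 + ln (real n))) \<longlonglongrightarrow> s" using s by real_asymp
  show "(\<lambda>n::nat. (1 + s * ln (real n)) / ln (real n + 1)) \<longlonglongrightarrow> s" using s by real_asymp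
  show "eventually (\<lambda>n. s * ln (real n) / (1 + ln (real n)) \<le> harm (nat \<lfloor>real n powr s\<rfloor>) / harm n)
      sequentially"
    using eventually_ge_at_top[of 1]
  proof eventually_elim
    case (elim n)
    then show ?case using harm_floor_powr_bounds[OF s elim] harm_le_ln[OF elim] s
      by (intro frac_le) (auto simp: harm_nonneg)
  qed
  show "eventually (\<lambda>n. harm (nat \<lfloor>real n powr s\<rfloor>) / harm n \<le> (1 + s * ln (real n)) / ln (real n + 1))
      sequentially"
    using eventually_ge_at_top[of 1]
  proof eventually_elim
    case (elim n)
    then show ?case using harm_floor_powr_bounds[OF s elim] ln_le_harm[of n] s
      by (intro frac_le) auto
  qed
qed

lemma ratio_of_harm_power_growth:
  fixes N :: "nat \<Rightarrow> real" and a :: "nat \<Rightarrow> nat"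
  assumes lim: "(\<lambda>n. N n / harm n ^ k) \<longlonglongrightarrow> c" and c: "c \<noteq> 0"
    and a: "filterlim a at_top sequentially" and h: "(\<lambda>n. harm (a n) / harm n) \<longlonglongrightarrow> s"
  shows "(\<lambda>n. N (a n) / N n) \<longlonglongrightarrow> s ^ k"
proof -
  have la: "(\<lambda>n. N (a n) / harm (a n) ^ k) \<longlonglongrightarrow> c" using filterlim_compose[OF lim a] by simp
  have "(\<lambda>n. (N (a n) / harm (a n) ^ k) / (N n / harm n ^ k) * (harm (a n) / harm n) ^ k) \<longlonglongrightarrow> c / c * s ^ k"
    by (intro tendsto_intros la lim h c)
  then have "(\<lambda>n. (N (a n) / harm (a n) ^ k) / (N n / harm n ^ k) * (harm (a n) / harm n) ^ k) \<longlonglongrightarrow> s ^ k"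
    using c by simp
  moreover have "eventually (\<lambda>n. (N (a n) / harm (a n) ^ k) / (N n / harm n ^ k) * (harm (a n) / harm n) ^ k
      = N (a n) / N n) sequentially"
    using eventually_ge_at_top[of 1] a[unfolded filterlim_at_top, rule_format, of 1]
  proof eventually_elim
    case (elim n)
    then have "harm (a n) \<noteq> (0::real)" "harm n \<noteq> (0::real)"
      using harm_pos_real[of n] harm_pos_real[of "a n"] by linarith+
    then show ?case by (cases "N n = 0") (simp_all add: power_divide field_simps)
  qed
  ultimately show ?thesis by (rule Lim_transform_eventually)
qed

lemma summable_poly_exp:
  fixes a g c :: real
  assumes "0 < g" "0 < a"
  shows "summable (\<lambda>j::nat. (1 + (real j + 1) * a) ^ k * exp (c - g * real j))"
proof -
  have "((\<lambda>x::real. (1 + (x + 1) * a) ^ k * exp (- (g/2) * x)) \<longlongrightarrow> 0) at_top"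
    using assms by real_asymp
  then have "(\<lambda>j::nat. (1 + (real j + 1) * a) ^ k * exp (- (g/2) * real j)) \<longlonglongrightarrow> 0"
    by (rule filterlim_compose) (rule filterlim_real_sequentially)
  then have "eventually (\<lambda>j. (1 + (real j + 1) * a) ^ k * exp (- (g/2) * real j) < 1) sequentially"
    by (rule order_tendstoD) simp
  then obtain N where N: "\<And>j. j \<ge> N \<Longrightarrow> (1 + (real j + 1) * a) ^ k * exp (- (g/2) * real j) < 1"
    by (auto simp: eventually_sequentially)
  show ?thesis
  proof (rule summable_comparison_test')
    show "summable (\<lambda>j. exp c * exp (- (g/2)) ^ j)"
      using assms by (intro summable_mult summable_geometric) simp
    fix j assume "N \<le> j"
    have pos: "0 \<le> (1 + (real j + 1) * a) ^ k" using assms by simp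
    have "(1 + (real j + 1) * a) ^ k * exp (c - g * real j)
        = ((1 + (real j + 1) * a) ^ k * exp (- (g/2) * real j)) * (exp c * exp (- (g/2) * real j))"
      by (simp add: exp_add[symmetric] exp_diff algebra_simps)
    also have "\<dots> \<le> 1 * (exp c * exp (- (g/2) * real j))"
      using N[OF \<open>N \<le> j\<close>] by (intro mult_right_mono) auto
    also have "exp (- (g/2) * real j) = exp (- (g/2)) ^ j"
      by (simp add: exp_of_nat_mult[symmetric] mult.commute)
    finally show "norm ((1 + (real j + 1) * a) ^ k * exp (c - g * real j)) \<le> exp c * exp (- (g/2)) ^ j"
      using pos by simp
  qed
qed

lemma tendsto_squeeze_family:
  fixes Z :: "nat \<Rightarrow> real" and lo hi :: "nat \<Rightarrow> nat \<Rightarrow> real" and l u :: "nat \<Rightarrow> real"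
  assumes ev: "\<And>r. eventually (\<lambda>n. lo r n \<le> Z n \<and> Z n \<le> hi r n) sequentially"
    and lol: "\<And>r. lo r \<longlonglongrightarrow> l r" and hil: "\<And>r. hi r \<longlonglongrightarrow> u r"
    and l: "l \<longlonglongrightarrow> L" and u: "u \<longlonglongrightarrow> L"
  shows "Z \<longlonglongrightarrow> L"
proof (rule order_tendstoI)
  fix a assume "a < L"
  then obtain r where r: "a < l r" using order_tendstoD(1)[OF l] by (auto simp: eventually_sequentially)
  have "eventually (\<lambda>n. a < lo r n) sequentially" by (rule order_tendstoD(1)[OF lol r])
  with ev[of r] show "eventually (\<lambda>n. a < Z n) sequentially" by eventually_elim auto
next
  fix b assume "L < b"
  then obtain r where r: "u r < b" using order_tendstoD(2)[OF u] by (auto simp: eventually_sequentially)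
  have "eventually (\<lambda>n. hi r n < b) sequentially" by (rule order_tendstoD(2)[OF hil r])
  with ev[of r] show "eventually (\<lambda>n. Z n < b) sequentially" by eventually_elim auto
qed

lemma AE_eventually_not_determined:
  assumes det: "\<And>j. determined_by (m j) (P j)"
    and bnd: "\<And>j. N \<le> j \<Longrightarrow> R.prob {w. P j w} \<le> f j" and sf: "summable f"
  shows "AE w in RRT. eventually (\<lambda>j. \<not> P j w) sequentially"
proof -
  have sets: "{w. P j w} \<in> sets RRT" for j by (rule sets_determined[OF det])
  have "summable (\<lambda>j. R.prob {w. P j w})"
    by (rule summable_comparison_test'[OF sf, of N]) (use bnd in simp)
  then have "AE w in RRT. eventually (\<lambda>j. w \<in> space RRT - {w. P j w}) sequentially"
    by (intro borel_cantelli_AE1) (use sets in \<open>auto simp: R.emeasure_eq_measure\<close>)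
  then show ?thesis by simp
qed

lemma avg_markov:
  assumes "\<And>w. 0 \<le> X w" "c > 0"
  shows "avg m (\<lambda>w. of_bool (c \<le> X w)) \<le> avg m X / c"
proof -
  have "avg m (\<lambda>w. of_bool (c \<le> X w)) \<le> avg m (\<lambda>w. X w / c)"
    using assms by (intro avg_mono) (auto simp: of_bool_def)
  then show ?thesis by (simp add: avg_divc)
qed

text \<open>Chebyshev: the martingale part exceeds \<epsilon> H_n^k with probability at most
  1/(\<epsilon>^2 H_n^k), since its second moment is at most the mean level size \<le> H_n^k.\<close>
lemma level_mart_chebyshev:
  assumes k: "1 \<le> k" and e: "0 < \<epsilon>" and n: "1 \<le> n"
  shows "R.prob {w. \<epsilon> * harm n ^ k \<le> \<bar>level_mart w n k\<bar>} \<le> 1 / (\<epsilon>^2 * harm n ^ k)"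
proof -
  define H where "H = (harm n ^ k :: real)"
  have H: "0 < H" using n by (simp add: H_def)
  have "R.prob {w. \<epsilon> * H \<le> \<bar>level_mart w n k\<bar>} = avg n (\<lambda>w. of_bool (\<epsilon> * H \<le> \<bar>level_mart w n k\<bar>))"
    by (rule prob_determined[OF level_mart_determined])
  also have "\<dots> = avg n (\<lambda>w. of_bool ((\<epsilon> * H)^2 \<le> (level_mart w n k)^2))"
  proof (intro arg_cong[where f="avg n"] ext)
    fix w
    have "0 < \<epsilon> * H" using e H by simp
    then show "of_bool (\<epsilon> * H \<le> \<bar>level_mart w n k\<bar>) = (of_bool ((\<epsilon> * H)^2 \<le> (level_mart w n k)^2) :: real)"
      by (simp add: abs_le_square_iff[symmetric])
  qed
  also have "\<dots> \<le> avg n (\<lambda>w. (level_mart w n k)^2) / (\<epsilon> * H)^2"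
    using e H by (intro avg_markov) auto
  also have "\<dots> \<le> H / (\<epsilon> * H)^2"
    using level_mart_second_moment[OF k, of n] mean_level_size_le[of n k]
    by (intro divide_right_mono) (auto simp: H_def)
  also have "\<dots> = 1 / (\<epsilon>^2 * H)" using H e by (simp add: power2_eq_square)
  finally show ?thesis by (simp add: H_def)
qed

text \<open>Along the sparse times these bounds are summable, so almost surely the martingale
  part is eventually below \<epsilon> H^k.\<close>
lemma level_mart_sparse_small:
  assumes k: "1 \<le> k" and e: "0 < \<epsilon>"
  shows "AE w in RRT. eventually (\<lambda>j. \<bar>level_mart w (sparse_time j) k\<bar> < \<epsilon> * harm (sparse_time j) ^ k)
      sequentially"
proof -
  have "AE w in RRT. eventually (\<lambda>j. \<not> \<epsilon> * harm (sparse_time j) ^ k \<le> \<bar>level_mart w (sparse_time j) k\<bar>)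
      sequentially"
  proof (rule AE_eventually_not_determined[OF level_mart_determined])
    show "summable (\<lambda>j. 1 / (\<epsilon>^2 * ln 2) * inverse (real j ^ 2))"
      by (intro summable_mult inverse_power_summable) auto
    fix j :: nat assume j: "1 \<le> j"
    show "R.prob {w. \<epsilon> * harm (sparse_time j) ^ k \<le> \<bar>level_mart w (sparse_time j) k\<bar>}
        \<le> 1 / (\<epsilon>^2 * ln 2) * inverse (real j ^ 2)"
    proof -
      define H where "H = (harm (sparse_time j) :: real)"
      have H1: "1 \<le> H" by (simp add: H_def harm_sparse_time_ge_1)
      have "real j ^ 2 * ln 2 \<le> H" using harm_sparse_time_ge[of j] by (simp add: H_def)
      also have "H \<le> H ^ k" using H1 k by (metis One_nat_def power_increasing power_one_right)
      finally have Hj: "real j ^ 2 * ln 2 \<le> H ^ k" .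
      have "R.prob {w. \<epsilon> * H ^ k \<le> \<bar>level_mart w (sparse_time j) k\<bar>} \<le> 1 / (\<epsilon>^2 * H ^ k)"
        using level_mart_chebyshev[OF k e, of "sparse_time j"] by (simp add: H_def sparse_time_def)
      also have "\<dots> \<le> 1 / (\<epsilon>^2 * (real j ^ 2 * ln 2))"
        using e Hj j H1 by (intro divide_left_mono mult_left_mono mult_pos_pos) auto
      finally show ?thesis by (simp add: H_def field_simps)
    qed
  qed
  then show ?thesis by (simp add: not_le)
qed

lemma tendsto_zero_if_eventually_small:
  fixes x b :: "nat \<Rightarrow> real"
  assumes pos: "\<And>j. 0 < b j"
    and small: "\<And>r. eventually (\<lambda>j. \<bar>x j\<bar> < b j / real (Suc r)) sequentially"
  shows "(\<lambda>j. x j / b j) \<longlonglongrightarrow> 0"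
proof (rule LIMSEQ_I)
  fix e :: real assume "0 < e"
  then obtain r where r: "1 / real (Suc r) < e" by (metis nat_approx_posE)
  obtain N where N: "\<And>j. j \<ge> N \<Longrightarrow> \<bar>x j\<bar> < b j / real (Suc r)"
    using small[of r] by (auto simp: eventually_sequentially)
  have "norm (x j / b j - 0) < e" if "j \<ge> N" for j
  proof -
    have "\<bar>x j\<bar> < 1 / real (Suc r) * b j" using N[OF that] by simp
    then have "\<bar>x j\<bar> / b j < 1 / real (Suc r)" using pos[of j] by (metis pos_divide_less_eq)
    moreover have "norm (x j / b j - 0) = \<bar>x j\<bar> / b j"
      using pos[of j] by (metis abs_div_pos diff_zero real_norm_def)
    ultimately show ?thesis using r by linarith
  qed
  then show "\<exists>no. \<forall>j\<ge>no. norm (x j / b j - 0) < e" by blast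
qed

lemma level_mart_sparse_limit:
  assumes "1 \<le> k"
  shows "AE w in RRT. (\<lambda>j. level_mart w (sparse_time j) k / harm (sparse_time j) ^ k) \<longlonglongrightarrow> 0"
proof -
  have "AE w in RRT. \<forall>r. eventually (\<lambda>j. \<bar>level_mart w (sparse_time j) k\<bar>
      < harm (sparse_time j) ^ k / real (Suc r)) sequentially"
    unfolding AE_all_countable
    using level_mart_sparse_small[OF assms, of "1 / real (Suc _)"] by simp
  then show ?thesis
  proof eventually_elim
    case (elim w)
    show ?case by (rule tendsto_zero_if_eventually_small) (simp add: sparse_time_def, use elim in blast)
  qed
qed

text \<open>The compensator is handled by Stolz-Cesaro, the passage
  from sparse times to all times by monotonicity.\<close>
lemma level_size_asymptotics_step:
  assumes k: "1 \<le> k"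
    and prev: "(\<lambda>n. real (level_size w n (k - 1)) / harm n ^ (k - 1)) \<longlonglongrightarrow> 1 / fact (k - 1)"
    and mart: "(\<lambda>j. level_mart w (sparse_time j) k / harm (sparse_time j) ^ k) \<longlonglongrightarrow> 0"
  shows "(\<lambda>n. real (level_size w n k) / harm n ^ k) \<longlonglongrightarrow> 1 / fact k"
proof -
  define comp where "comp n = (\<Sum>j<n. real (level_size w j (k - 1)) / real (Suc j))" for n
  have fk: "fact (k - 1) * real k = (fact k :: real)"
    using fact_reduce[of k, where 'a=real] k by (simp add: mult.commute)
  have comp_lim: "(\<lambda>n. comp n / harm n ^ k) \<longlonglongrightarrow> 1 / fact k"
  proof (rule stolz_cesaro)
    show "harm n ^ k < (harm (Suc n) ^ k :: real)" for n
      using k by (intro power_strict_mono) (auto simp: harm_nonneg harm_Suc)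
    show "filterlim (\<lambda>n. harm n ^ k :: real) at_top sequentially"
      using k by (intro filterlim_pow_at_top harm_at_top) auto
    show "(\<lambda>n. (comp (Suc n) - comp n) / (harm (Suc n) ^ k - harm n ^ k)) \<longlonglongrightarrow> 1 / fact k"
      using harm_power_stolz_quotient[OF k prev] fk by (simp add: comp_def)
  qed
  have "(\<lambda>j. level_mart w (sparse_time j) k / harm (sparse_time j) ^ k
           + comp (sparse_time j) / harm (sparse_time j) ^ k) \<longlonglongrightarrow> 0 + 1 / fact k"
    using LIMSEQ_subseq_LIMSEQ[OF comp_lim strict_mono_sparse_time]
    by (intro tendsto_add mart) (simp add: comp_def o_def)
  then have sparse: "(\<lambda>j. real (level_size w (sparse_time j) k) / harm (sparse_time j) ^ k)
      \<longlonglongrightarrow> 1 / fact k"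
    by (simp add: level_size_decomposition[OF k] comp_def add_divide_distrib)
  show ?thesis
  proof (rule ratio_limit_from_subsequence[OF _ _ _ _ strict_mono_sparse_time sparse])
    show "mono (\<lambda>n. real (level_size w n k))" by (rule monoI) (simp add: level_size_mono)
    show "mono (\<lambda>n. harm n ^ k :: real)"
      by (rule monoI) (intro power_mono harm_mono, auto simp: harm_nonneg)
    show "0 < (harm n ^ k :: real)" if "sparse_time 0 \<le> n" for n
      using that by (simp add: sparse_time_def)
    have "(\<lambda>j. (harm (sparse_time (Suc j)) / harm (sparse_time j)) ^ k :: real) \<longlonglongrightarrow> 1 ^ k"
      by (intro tendsto_power harm_sparse_time_ratio)
    then show "(\<lambda>j. harm (sparse_time (Suc j)) ^ k / harm (sparse_time j) ^ k :: real) \<longlonglongrightarrow> 1"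
      by (simp add: power_divide)
  qed simp
qed

lemma level_size_asymptotics:
  "AE w in RRT. \<forall>k. (\<lambda>n. real (level_size w n k) / harm n ^ k) \<longlonglongrightarrow> 1 / fact k"
proof -
  have "AE w in RRT. (\<lambda>n. real (level_size w n k) / harm n ^ k) \<longlonglongrightarrow> 1 / fact k" for k
  proof (induction k)
    case 0 then show ?case by (simp add: level_size_root)
  next
    case (Suc k)
    have "AE w in RRT. (\<lambda>j. level_mart w (sparse_time j) (Suc k) / harm (sparse_time j) ^ Suc k)
        \<longlonglongrightarrow> 0"
      by (rule level_mart_sparse_limit) simp
    with Suc show ?case
      by eventually_elim (rule level_size_asymptotics_step, auto)
  qed
  then show ?thesis by (simp add: AE_all_countable)
qed

lemma union_children_tail_bound:
  assumes I: "finite I" "\<And>i. i \<in> I \<Longrightarrow> i \<le> m"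
    and B: "\<And>i. i \<in> I \<Longrightarrow> (exp \<theta> - 1) * (harm m - harm i) \<le> B"
  shows "avg m (\<lambda>w. of_bool (\<exists>i\<in>I. depth w i = k \<and> \<theta> * y \<le> \<theta> * real (children w m i)))
     \<le> (\<Sum>i\<in>I. depth_prob i k) * exp (B - \<theta> * y)"
proof -
  have "avg m (\<lambda>w. of_bool (\<exists>i\<in>I. depth w i = k \<and> \<theta> * y \<le> \<theta> * real (children w m i)))
      \<le> (\<Sum>i\<in>I. avg m (\<lambda>w. of_bool (depth w i = k \<and> \<theta> * y \<le> \<theta> * real (children w m i))))"
    by (rule avg_indicator_ex_le[OF I(1)])
  also have "\<dots> \<le> (\<Sum>i\<in>I. depth_prob i k * exp (B - \<theta> * y))"
  proof (rule sum_mono)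
    fix i assume "i \<in> I"
    have "avg m (\<lambda>w. of_bool (depth w i = k \<and> \<theta> * y \<le> \<theta> * real (children w m i)))
        \<le> depth_prob i k * exp ((exp \<theta> - 1) * (harm m - harm i) - \<theta> * y)"
      by (rule children_tail_bound[OF I(2)[OF \<open>i \<in> I\<close>]])
    also have "\<dots> \<le> depth_prob i k * exp (B - \<theta> * y)"
      using B[OF \<open>i \<in> I\<close>] by (intro mult_left_mono depth_prob_nonneg) auto
    finally show "avg m (\<lambda>w. of_bool (depth w i = k \<and> \<theta> * y \<le> \<theta> * real (children w m i)))
        \<le> depth_prob i k * exp (B - \<theta> * y)" .
  qed
  finally show ?thesis by (simp add: sum_distrib_right)
qed

lemma sum_depth_prob_le:
  assumes "I \<subseteq> {..a}" "a \<le> 2 ^ Suc j"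
  shows "(\<Sum>i\<in>I. depth_prob i k) \<le> (1 + (real j + 1) * ln 2) ^ k"
proof -
  have "(\<Sum>i\<in>I. depth_prob i k) \<le> (\<Sum>i\<le>a. depth_prob i k)"
    using assms by (intro sum_mono2) (auto simp: depth_prob_nonneg)
  also have "\<dots> \<le> harm a ^ k" using mean_level_size_le by (simp add: mean_level_size_eq_sum)
  also have "\<dots> \<le> harm ((2::nat) ^ Suc j) ^ k"
    using assms by (intro power_mono harm_mono) (auto simp: harm_nonneg)
  also have "\<dots> \<le> (1 + (real j + 1) * ln 2) ^ k"
    using harm_pow2_bounds(2)[of "Suc j"] by (intro power_mono) (auto simp: harm_nonneg add.commute)
  finally show ?thesis .
qed

definition early_slow :: "nat \<Rightarrow> real \<Rightarrow> real \<Rightarrow> nat \<Rightarrow> (nat \<Rightarrow> nat) \<Rightarrow> bool" where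
  "early_slow k t \<delta> j w \<longleftrightarrow> (\<exists>i\<in>{i. i \<le> 2 ^ j \<and> real i \<le> 2 powr (real (Suc j) * (1 - t - \<delta>))}.
      depth w i = k \<and> real (children w (2 ^ j) i) \<le> t * real (Suc j) * ln 2)"

definition late_fast :: "nat \<Rightarrow> real \<Rightarrow> real \<Rightarrow> nat \<Rightarrow> (nat \<Rightarrow> nat) \<Rightarrow> bool" where
  "late_fast k t \<delta> j w \<longleftrightarrow> (\<exists>i\<in>{i. i \<le> 2 ^ Suc j \<and> 2 powr (real j * (1 - t + \<delta>)) \<le> real i}.
      depth w i = k \<and> t * real j * ln 2 - 1 \<le> real (children w (2 ^ Suc j) i))"

lemma exists_depth_children_determined:
  assumes "\<And>i. i \<in> I \<Longrightarrow> i \<le> m"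
  shows "determined_by m (\<lambda>w. \<exists>i\<in>I. depth w i = k \<and> Q i (children w m i))"
proof -
  have "depth w i = depth w' i \<and> children w m i = children w' m i"
    if "\<forall>l<m. w l = w' l" "i \<in> I" for w w' i
  proof -
    have "\<forall>l<i. w l = w' l" using that assms[of i] by auto
    then show ?thesis using that by (auto intro!: depth_prefix_cong children_prefix_cong)
  qed
  then show ?thesis unfolding determined_by_def by metis
qed

lemma early_slow_determined: "determined_by (2 ^ j) (early_slow k t \<delta> j)"
  unfolding early_slow_def by (rule exists_depth_children_determined) simp

lemma late_fast_determined: "determined_by (2 ^ Suc j) (late_fast k t \<delta> j)"
  unfolding late_fast_def by (rule exists_depth_children_determined) simp

lemma harm_gap_ge:
  assumes "1 \<le> X" "real i \<le> X" "i \<le> m"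
  shows "ln (real m) - ln 2 - ln X \<le> harm m - harm i"
proof -
  have "ln (real m) \<le> ln (real m + 1)" by (cases "m = 0") auto
  moreover have "ln (real i + 1) \<le> ln (2 * X)" using assms by simp
  moreover have "ln (2 * X) = ln 2 + ln X" using assms by (simp add: ln_mult)
  ultimately show ?thesis using harm_diff_ge_ln[OF assms(3)] by linarith
qed

lemma harm_gap_le:
  assumes "1 \<le> X" "X \<le> real i" "i \<le> m"
  shows "harm m - harm i \<le> ln (real m) - ln X"
proof -
  have "1 \<le> i" using assms by linarith
  then have "harm m - harm i \<le> ln (real m) - ln (real i)" using harm_diff_le_ln assms by blast
  moreover have "ln X \<le> ln (real i)" using assms by simp
  ultimately show ?thesis by linarith
qed

lemma real_pow2_eq_powr: "real ((2::nat) ^ m) = 2 powr real m"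
  by (simp add: powr_realpow)

lemma le_nat_floor_iff: "0 \<le> x \<Longrightarrow> i \<le> nat \<lfloor>x\<rfloor> \<longleftrightarrow> real i \<le> x"
  by linarith

lemma early_slow_prob:
  assumes t: "0 < t" and d: "0 < \<delta>" and td: "t + \<delta> < 1"
  shows "R.prob {w. early_slow k t \<delta> j w} \<le> (1 + (real j + 1) * ln 2) ^ k *
    exp ((exp (-\<delta>) - 1) * (real j * ln 2 - ln 2 - real (Suc j) * (1 - t - \<delta>) * ln 2) + \<delta> * (t * real (Suc j) * ln 2))"
proof -
  define X where "X = (2::real) powr (real (Suc j) * (1 - t - \<delta>))"
  define I where "I = {i. i \<le> (2::nat) ^ j \<and> real i \<le> X}"
  define y where "y = t * real (Suc j) * ln 2"
  define D where "D = real j * ln 2 - ln 2 - real (Suc j) * (1 - t - \<delta>) * ln 2"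
  have X1: "1 \<le> X" unfolding X_def using td by (intro ge_one_powr_ge_zero) auto
  have event: "early_slow k t \<delta> j w \<longleftrightarrow> (\<exists>i\<in>I. depth w i = k \<and> (-\<delta>) * y \<le> (-\<delta>) * real (children w (2 ^ j) i))"
    for w using d by (simp add: early_slow_def I_def X_def y_def mult.assoc)
  have "R.prob {w. early_slow k t \<delta> j w} = avg (2 ^ j) (\<lambda>w. of_bool (early_slow k t \<delta> j w))"
    by (rule prob_determined[OF early_slow_determined])
  also have "\<dots> \<le> (\<Sum>i\<in>I. depth_prob i k) * exp ((exp (-\<delta>) - 1) * D - (-\<delta>) * y)"
    unfolding event
  proof (rule union_children_tail_bound)
    show "finite I" "\<And>i. i \<in> I \<Longrightarrow> i \<le> 2 ^ j" by (auto simp: I_def)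
    fix i assume "i \<in> I"
    then have "D \<le> harm (2 ^ j) - harm i"
      using harm_gap_ge[OF X1, of i "2 ^ j"] by (simp add: I_def D_def X_def ln_realpow)
    then show "(exp (-\<delta>) - 1) * (harm (2 ^ j) - harm i) \<le> (exp (-\<delta>) - 1) * D"
      using d by (intro mult_left_mono_neg) auto
  qed
  also have "\<dots> \<le> (1 + (real j + 1) * ln 2) ^ k * exp ((exp (-\<delta>) - 1) * D - (-\<delta>) * y)"
  proof (intro mult_right_mono sum_depth_prob_le)
    show "I \<subseteq> {..nat \<lfloor>X\<rfloor>}" unfolding I_def by auto linarith
    have "X \<le> 2 powr real (Suc j)" unfolding X_def using t d by (intro powr_mono) auto
    then have "X \<le> real ((2::nat) ^ Suc j)" by (simp only: real_pow2_eq_powr)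
    then have "\<lfloor>X\<rfloor> \<le> int ((2::nat) ^ Suc j)" by linarith
    then show "nat \<lfloor>X\<rfloor> \<le> 2 ^ Suc j" by (simp add: nat_le_iff)
  qed simp
  finally show ?thesis by (simp add: D_def y_def)
qed

lemma late_fast_prob:
  assumes t: "0 < t" "t < 1" and d: "0 < \<delta>" "\<delta> < t" and th: "0 < \<theta>"
  shows "R.prob {w. late_fast k t \<delta> j w} \<le> (1 + (real j + 1) * ln 2) ^ k *
    exp ((exp \<theta> - 1) * (real (Suc j) * ln 2 - real j * (1 - t + \<delta>) * ln 2) - \<theta> * (t * real j * ln 2 - 1))"
proof -
  define X where "X = (2::real) powr (real j * (1 - t + \<delta>))"
  define M where "M = (2::nat) ^ Suc j"
  define I where "I = {i. i \<le> M \<and> X \<le> real i}"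
  define y where "y = t * real j * ln 2 - 1"
  define E where "E = real (Suc j) * ln 2 - real j * (1 - t + \<delta>) * ln 2"
  have X1: "1 \<le> X" unfolding X_def using t d by (intro ge_one_powr_ge_zero) auto
  have event: "late_fast k t \<delta> j w \<longleftrightarrow> (\<exists>i\<in>I. depth w i = k \<and> \<theta> * y \<le> \<theta> * real (children w M i))"
    for w using th by (simp add: late_fast_def I_def X_def y_def M_def)
  have "R.prob {w. late_fast k t \<delta> j w} = avg M (\<lambda>w. of_bool (late_fast k t \<delta> j w))"
    unfolding M_def by (rule prob_determined[OF late_fast_determined])
  also have "\<dots> \<le> (\<Sum>i\<in>I. depth_prob i k) * exp ((exp \<theta> - 1) * E - \<theta> * y)"
    unfolding event
  proof (rule union_children_tail_bound)
    show "finite I" "\<And>i. i \<in> I \<Longrightarrow> i \<le> M" by (auto simp: I_def)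
    fix i assume "i \<in> I"
    moreover have "ln (real M) = real (Suc j) * ln 2"
      unfolding M_def using ln_realpow[of 2 "Suc j"] by simp
    moreover have "ln X = real j * (1 - t + \<delta>) * ln 2" by (simp add: X_def)
    ultimately have "harm M - harm i \<le> E"
      using harm_gap_le[OF X1, of i M] by (simp add: I_def E_def)
    then show "(exp \<theta> - 1) * (harm M - harm i) \<le> (exp \<theta> - 1) * E"
      using th by (intro mult_left_mono) auto
  qed
  also have "\<dots> \<le> (1 + (real j + 1) * ln 2) ^ k * exp ((exp \<theta> - 1) * E - \<theta> * y)"
    by (intro mult_right_mono sum_depth_prob_le[of I M]) (auto simp: I_def M_def)
  finally show ?thesis by (simp add: E_def y_def)
qed

text \<open>For t + \<delta> < 1 the Chernoff exponent of the early bad event decays linearly in j,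
  so by Borel-Cantelli almost surely only finitely many early bad events occur.\<close>
lemma early_slow_AE:
  assumes t: "0 < t" and d: "0 < \<delta>" and td: "t + \<delta> < 1"
  shows "AE w in RRT. eventually (\<lambda>j. \<not> early_slow k t \<delta> j w) sequentially"
proof -
  define c where "c = 1 - exp (-\<delta>)"
  define g where "g = ln 2 * (c * (t + \<delta>) - \<delta> * t)"
  define C0 where "C0 = \<delta> * t * ln 2 + c * ln 2 + c * (1 - t - \<delta>) * ln 2"
  have "1 / exp \<delta> \<le> 1 / (1 + \<delta>)"
    using d by (intro divide_left_mono exp_ge_add_one_self) auto
  then have cge: "\<delta> / (1 + \<delta>) \<le> c" using d by (simp add: c_def exp_minus field_simps)
  have "\<delta> * (t + \<delta>) / (1 + \<delta>) \<le> c * (t + \<delta>)"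
    using mult_right_mono[OF cge, of "t + \<delta>"] t d by simp
  moreover have "\<delta> * (t + \<delta>) / (1 + \<delta>) - \<delta> * t = \<delta> * \<delta> * (1 - t) / (1 + \<delta>)"
    using d by (simp add: field_simps)
  moreover have "0 < \<delta> * \<delta> * (1 - t) / (1 + \<delta>)" using d td t by simp
  ultimately have "0 < c * (t + \<delta>) - \<delta> * t" by linarith
  then have g: "0 < g" unfolding g_def by simp
  show ?thesis
  proof (rule AE_eventually_not_determined[OF early_slow_determined])
    fix j
    show "R.prob {w. early_slow k t \<delta> j w} \<le> (1 + (real j + 1) * ln 2) ^ k * exp (C0 - g * real j)"
      using early_slow_prob[OF t d td, of k j] by (simp add: c_def g_def C0_def algebra_simps)
  next
    show "summable (\<lambda>j. (1 + (real j + 1) * ln 2) ^ k * exp (C0 - g * real j))"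
      by (rule summable_poly_exp[OF g]) simp
  qed
qed

lemma late_fast_AE:
  assumes t: "0 < t" "t < 1" and d: "0 < \<delta>" "\<delta> < t"
  shows "AE w in RRT. eventually (\<lambda>j. \<not> late_fast k t \<delta> j w) sequentially"
proof -
  define \<theta> where "\<theta> = \<delta> / 2"
  have th: "0 < \<theta>" "\<theta> < 1" using d t by (auto simp: \<theta>_def)
  define c where "c = exp \<theta> - 1"
  define g where "g = ln 2 * (\<theta> * t - c * (t - \<delta>))"
  define C0 where "C0 = \<theta> + c * ln 2"
  have "1 / exp (-\<theta>) \<le> 1 / (1 - \<theta>)"
    using th exp_ge_add_one_self[of "-\<theta>"] by (intro divide_left_mono) auto
  then have cle: "c \<le> \<theta> / (1 - \<theta>)" using th by (simp add: c_def exp_minus field_simps)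
  have "c * (t - \<delta>) \<le> \<theta> / (1 - \<theta>) * (t - \<delta>)"
    using mult_right_mono[OF cle, of "t - \<delta>"] d by simp
  moreover have "\<theta> * t - \<theta> / (1 - \<theta>) * (t - \<delta>) = \<theta> * (\<delta> - \<theta> * t) / (1 - \<theta>)"
    using th by (simp add: field_simps)
  moreover have "0 < \<theta> * (\<delta> - \<theta> * t) / (1 - \<theta>)"
    using th d t by (simp add: \<theta>_def mult_less_cancel_left1)
  ultimately have "0 < \<theta> * t - c * (t - \<delta>)" by linarith
  then have g: "0 < g" unfolding g_def by simp
  show ?thesis
  proof (rule AE_eventually_not_determined[OF late_fast_determined])
    fix j
    show "R.prob {w. late_fast k t \<delta> j w} \<le> (1 + (real j + 1) * ln 2) ^ k * exp (C0 - g * real j)"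
      using late_fast_prob[OF t d th(1), of k j] by (simp add: c_def g_def C0_def algebra_simps)
  next
    show "summable (\<lambda>j. (1 + (real j + 1) * ln 2) ^ k * exp (C0 - g * real j))"
      by (rule summable_poly_exp[OF g]) simp
  qed
qed

definition high_degree :: "(nat \<Rightarrow> nat) \<Rightarrow> nat \<Rightarrow> nat \<Rightarrow> real \<Rightarrow> nat set" where
  "high_degree w n k t = {i. i \<le> n \<and> i \<in> level w n k \<and> real (deg w n i) > t * ln (real n)}"

lemma Z_eq: "Z w n k t = real (card (high_degree w n k t)) / real (level_size w n k)"
  by (simp add: Z_def high_degree_def level_size_def)

lemma ln_dyadic_bounds:
  assumes "2 ^ j \<le> n" "n < 2 ^ Suc j"
  shows "real j * ln 2 \<le> ln (real n)" "ln (real n) < real (Suc j) * ln 2"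
proof -
  have "real ((2::nat) ^ j) \<le> real n" using assms(1) by (simp del: of_nat_power)
  then have "ln (real ((2::nat) ^ j)) \<le> ln (real n)" by (rule ln_mono) simp
  then show "real j * ln 2 \<le> ln (real n)" using ln_realpow[of 2 j] by simp
  have "0 < real n" using assms(1) by (metis less_le_trans of_nat_0_less_iff zero_less_power zero_less_numeral)
  moreover have "real n < real ((2::nat) ^ Suc j)" using assms(2) by (simp del: of_nat_power)
  ultimately have "ln (real n) < ln (real ((2::nat) ^ Suc j))" by (subst ln_less_cancel_iff) auto
  then show "ln (real n) < real (Suc j) * ln 2" using ln_realpow[of 2 "Suc j"] by simp
qed

lemma early_vertices_high_degree:
  assumes w: "admissible w" and good: "\<not> early_slow k t \<delta> j w"
    and n: "2 ^ j \<le> n" "n < 2 ^ Suc j" and t: "0 < t"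
    and s: "0 < 1 - t - \<delta>" "real (Suc j) * (1 - t - \<delta>) \<le> real j"
  shows "{i. i \<le> nat \<lfloor>real n powr (1 - t - \<delta>)\<rfloor> \<and> depth w i = k} \<subseteq> high_degree w n k t"
proof
  fix i assume "i \<in> {i. i \<le> nat \<lfloor>real n powr (1 - t - \<delta>)\<rfloor> \<and> depth w i = k}"
  then have i: "real i \<le> real n powr (1 - t - \<delta>)" "depth w i = k"
    using le_nat_floor_iff[of "real n powr (1 - t - \<delta>)" i] by auto
  have "real n powr (1 - t - \<delta>) \<le> real ((2::nat) ^ Suc j) powr (1 - t - \<delta>)"
    using n(2) s by (intro powr_mono2) (auto simp del: of_nat_power)
  also have "\<dots> = 2 powr (real (Suc j) * (1 - t - \<delta>))" by (simp only: real_pow2_eq_powr powr_powr)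
  finally have i2: "real i \<le> 2 powr (real (Suc j) * (1 - t - \<delta>))" using i by simp
  also have "\<dots> \<le> 2 powr real j" using s by (intro powr_mono) auto
  finally have ij: "i \<le> 2 ^ j" by (simp add: real_pow2_eq_powr[symmetric] del: of_nat_power)
  then have "i \<le> n" using n(1) by simp
  have "t * real (Suc j) * ln 2 < real (children w (2 ^ j) i)"
    using good ij i i2 unfolding early_slow_def by auto
  also have "\<dots> \<le> real (deg w n i)"
    using children_mono[OF n(1), of w i] children_le_deg[OF w, of n i] by simp
  finally have "t * (real (Suc j) * ln 2) < real (deg w n i)" by (simp add: mult.assoc)
  moreover have "t * ln (real n) \<le> t * (real (Suc j) * ln 2)"
    using ln_dyadic_bounds(2)[OF n] t by (intro mult_left_mono) auto
  ultimately show "i \<in> high_degree w n k t"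
    unfolding high_degree_def level_def using \<open>i \<le> n\<close> i by auto
qed

lemma late_vertices_low_degree:
  assumes w: "admissible w" and good: "\<not> late_fast k t \<delta> j w"
    and n: "2 ^ j \<le> n" "n < 2 ^ Suc j" and t: "0 < t" and s: "0 < 1 - t + \<delta>"
  shows "high_degree w n k t \<subseteq> {i. i \<le> nat \<lfloor>real n powr (1 - t + \<delta>)\<rfloor> \<and> depth w i = k}"
proof
  fix i assume "i \<in> high_degree w n k t"
  then have i: "i \<le> n" "depth w i = k" "t * ln (real n) < real (deg w n i)"
    by (auto simp: high_degree_def level_def)
  have "i \<le> nat \<lfloor>real n powr (1 - t + \<delta>)\<rfloor>"
  proof (rule ccontr)
    assume "\<not> i \<le> nat \<lfloor>real n powr (1 - t + \<delta>)\<rfloor>"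
    then have x: "real n powr (1 - t + \<delta>) \<le> real i"
      using le_nat_floor_iff[of "real n powr (1 - t + \<delta>)" i] by auto
    have "2 powr (real j * (1 - t + \<delta>)) = real ((2::nat) ^ j) powr (1 - t + \<delta>)"
      by (simp only: real_pow2_eq_powr powr_powr)
    also have "\<dots> \<le> real n powr (1 - t + \<delta>)"
      using n(1) s by (intro powr_mono2) (auto simp del: of_nat_power)
    finally have "2 powr (real j * (1 - t + \<delta>)) \<le> real i" using x by simp
    then have "real (children w (2 ^ Suc j) i) < t * real j * ln 2 - 1"
      using good i(1,2) n(2) unfolding late_fast_def by auto
    moreover have "real (deg w n i) \<le> 1 + real (children w n i)"
      using deg_le_Suc_children[OF w, of n i] by simp
    moreover have "real (children w n i) \<le> real (children w (2 ^ Suc j) i)"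
      using children_mono[of n "2 ^ Suc j" w i] n(2) by simp
    moreover have "t * (real j * ln 2) \<le> t * ln (real n)"
      using ln_dyadic_bounds(1)[OF n] t by (intro mult_left_mono) auto
    ultimately show False using i(3) by (simp add: mult.assoc)
  qed
  then show "i \<in> {i. i \<le> nat \<lfloor>real n powr (1 - t + \<delta>)\<rfloor> \<and> depth w i = k}" using i by simp
qed

lemma high_degree_count_bounds:
  assumes t: "0 < t" and d: "0 < \<delta>" "\<delta> < t" "t + \<delta> < 1" and w: "admissible w"
    and ev: "eventually (\<lambda>j. \<not> early_slow k t \<delta> j w \<and> \<not> late_fast k t \<delta> j w) sequentially"
  shows "eventually (\<lambda>n. level_size w (nat \<lfloor>real n powr (1 - t - \<delta>)\<rfloor>) k \<le> card (high_degree w n k t)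
           \<and> card (high_degree w n k t) \<le> level_size w (nat \<lfloor>real n powr (1 - t + \<delta>)\<rfloor>) k) sequentially"
proof -
  have "eventually (\<lambda>j::nat. real (Suc j) * (1 - t - \<delta>) \<le> real j) sequentially"
    using t d by real_asymp
  with ev have "eventually (\<lambda>j. \<not> early_slow k t \<delta> j w \<and> \<not> late_fast k t \<delta> j w
      \<and> real (Suc j) * (1 - t - \<delta>) \<le> real j) sequentially"
    by eventually_elim auto
  then obtain J0 where J0: "\<And>j. j \<ge> J0 \<Longrightarrow> \<not> early_slow k t \<delta> j w \<and> \<not> late_fast k t \<delta> j w
      \<and> real (Suc j) * (1 - t - \<delta>) \<le> real j"
    by (auto simp: eventually_sequentially)
  show ?thesis unfolding eventually_sequentially
  proof (intro exI[of _ "2 ^ J0"] allI impI)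
    fix n :: nat assume n: "2 ^ J0 \<le> n"
    moreover have "(1::nat) \<le> 2 ^ J0" by simp
    ultimately have "1 \<le> n" by linarith
    then obtain j where j: "2 ^ j \<le> n" "n < 2 ^ Suc j" using ex_power_ivl1[of 2 n] by auto
    have "J0 \<le> j"
    proof (rule ccontr)
      assume "\<not> J0 \<le> j"
      then have "2 ^ Suc j \<le> (2::nat) ^ J0" by (intro power_increasing) auto
      then show False using j n by simp
    qed
    note good = J0[OF this]
    have fin: "finite (high_degree w n k t)" by (simp add: high_degree_def)
    have "level_size w (nat \<lfloor>real n powr (1 - t - \<delta>)\<rfloor>) k \<le> card (high_degree w n k t)"
      unfolding level_size_def level_def
      by (rule card_mono[OF fin early_vertices_high_degree]) (use w good j t d in auto)
    moreover have "card (high_degree w n k t) \<le> level_size w (nat \<lfloor>real n powr (1 - t + \<delta>)\<rfloor>) k"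
      unfolding level_size_def level_def
      by (rule card_mono[OF _ late_vertices_low_degree]) (use w good j t d in auto)
    ultimately show "level_size w (nat \<lfloor>real n powr (1 - t - \<delta>)\<rfloor>) k \<le> card (high_degree w n k t)
        \<and> card (high_degree w n k t) \<le> level_size w (nat \<lfloor>real n powr (1 - t + \<delta>)\<rfloor>) k" ..
  qed
qed

definition gap :: "real \<Rightarrow> nat \<Rightarrow> real" where
  "gap t r = min t (1 - t) / real (r + 2)"

lemma gap_bounds:
  assumes "0 < t" "t < 1"
  shows "0 < gap t r" "gap t r < t" "t + gap t r < 1"
proof -
  define m where "m = min t (1 - t)"
  have m: "0 < m" "m \<le> t" "m \<le> 1 - t" using assms by (auto simp: m_def)
  have g: "gap t r = m / real (r + 2)" by (simp add: gap_def m_def)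
  have le: "m / real (r + 2) \<le> m / 2" using m by (intro divide_left_mono) auto
  show "0 < gap t r" unfolding g using m by simp
  show "gap t r < t" "t + gap t r < 1" unfolding g using le m by linarith+
qed

lemma gap_tendsto_0: "(\<lambda>r. gap t r) \<longlonglongrightarrow> 0"
proof -
  have "(\<lambda>r::nat. c / real (r + 2)) \<longlonglongrightarrow> 0" for c :: real by real_asymp
  then show ?thesis by (simp add: gap_def)
qed

lemma Z_limit_on_good_path:
  assumes k: "1 \<le> k" and t: "0 < t" "t < 1" and w: "admissible w"
    and lev: "(\<lambda>n. real (level_size w n k) / harm n ^ k) \<longlonglongrightarrow> 1 / fact k"
    and good: "\<And>r. eventually (\<lambda>j. \<not> early_slow k t (gap t r) j w \<and> \<not> late_fast k t (gap t r) j w) sequentially"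
  shows "(\<lambda>n. Z w n k t) \<longlonglongrightarrow> (1 - t) ^ k"
proof (rule tendsto_squeeze_family)
  fix r
  note D = gap_bounds[OF t, of r]
  show "eventually (\<lambda>n. real (level_size w (nat \<lfloor>real n powr (1 - t - gap t r)\<rfloor>) k) / real (level_size w n k)
      \<le> Z w n k t \<and> Z w n k t \<le> real (level_size w (nat \<lfloor>real n powr (1 - t + gap t r)\<rfloor>) k) / real (level_size w n k))
      sequentially"
    using high_degree_count_bounds[OF t(1) D w good]
    by eventually_elim (auto simp: Z_eq intro!: divide_right_mono)
  have c: "1 / fact k \<noteq> (0::real)" by simp
  show "(\<lambda>n. real (level_size w (nat \<lfloor>real n powr (1 - t - gap t r)\<rfloor>) k) / real (level_size w n k))
      \<longlonglongrightarrow> (1 - t - gap t r) ^ k"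
    by (rule ratio_of_harm_power_growth[OF lev c floor_powr_tendsto harm_floor_powr_ratio]) (use D in auto)
  show "(\<lambda>n. real (level_size w (nat \<lfloor>real n powr (1 - t + gap t r)\<rfloor>) k) / real (level_size w n k))
      \<longlonglongrightarrow> (1 - t + gap t r) ^ k"
    by (rule ratio_of_harm_power_growth[OF lev c floor_powr_tendsto harm_floor_powr_ratio]) (use D t in auto)
next
  have "(\<lambda>r. (1 - t - gap t r) ^ k) \<longlonglongrightarrow> (1 - t - 0) ^ k"
    by (intro tendsto_intros gap_tendsto_0)
  then show "(\<lambda>r. (1 - t - gap t r) ^ k) \<longlonglongrightarrow> (1 - t) ^ k" by simp
  have "(\<lambda>r. (1 - t + gap t r) ^ k) \<longlonglongrightarrow> (1 - t + 0) ^ k"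
    by (intro tendsto_intros gap_tendsto_0)
  then show "(\<lambda>r. (1 - t + gap t r) ^ k) \<longlonglongrightarrow> (1 - t) ^ k" by simp
qed

theorem theorem2p1:
  fixes k :: nat and t :: real
  assumes "1 \<le> k" and "0 < t" and "t < 1"
  shows "AE \<omega> in RRT. (\<lambda>n. Z \<omega> n k t) \<longlonglongrightarrow> (1 - t) ^ k"
proof -
  note gaps = gap_bounds[OF assms(2,3)]
  have "AE w in RRT. \<forall>r. eventually (\<lambda>j. \<not> early_slow k t (gap t r) j w) sequentially"
    unfolding AE_all_countable using gaps assms by (intro allI early_slow_AE) auto
  moreover have "AE w in RRT. \<forall>r. eventually (\<lambda>j. \<not> late_fast k t (gap t r) j w) sequentially"
    unfolding AE_all_countable using gaps assms by (intro allI late_fast_AE) auto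
  ultimately show ?thesis using AE_admissible level_size_asymptotics
  proof eventually_elim
    case (elim w)
    show ?case
    proof (rule Z_limit_on_good_path[OF assms elim(3) elim(4)[rule_format]])
      fix r
      show "eventually (\<lambda>j. \<not> early_slow k t (gap t r) j w \<and> \<not> late_fast k t (gap t r) j w) sequentially"
        using elim(1,2) by (simp add: eventually_conj_iff)
    qed
  qed
qed

end
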